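(* Let $n\in\mathbb{N}$, $\sigma>0$, let $f:\mathbb{R}\to\mathbb{R}$ be smooth and odd, and let $F:\mathbb{R}\times X\to Y$, $F(\lambda,u)=-\Delta(\Delta u+\lambda f(u))-\lambda\sigma u$, so that $D_{uu}F(\lambda,u)[v,w]=-\Delta(\lambda f''(u)vw)$. Then for all $\lambda\in\mathbb{R}$ and $u\in X_a$: (i) $D_{uu}F(\lambda,u)[X_a,X_a]\subset Y_a$; (ii) $D_{uu}F(\lambda,u)[X_a\oplus X_b,X_a\oplus X_b]\subset Y_a\oplus Y_b$; (iii) $D_{uu}F(\lambda,u)[X_a,X_b]\subset Y_b$; (iv) $D_{uu}F(\lambda,u)[X_c,X_c]\subset Y_a\oplus Y_b$; (v) $D_{uu}F(\lambda,u)[X_a\oplus X_b,X_c]\subset Y_c$. (By symmetry of $D_{uu}F$ the order of the arguments in (iii) and (v) is irrelevant.)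
   Context: Let $\Omega=(0,1)$, $\Delta=d^2/dx^2$. $X=\{u\in H^2(\Omega): u'(0)=u'(1)=0,\ \int_\Omega u\,dx=0\}$; $Y=H^{-2}(\Omega)$ with norm $\|\Delta^{-1}u\|_{L^2}$, where $\Delta$ maps mean-zero $L^2(\Omega)$ isometrically onto $H^{-2}(\Omega)$. Let $H^2_{per}(\mathbb{R})$, $L^2_{per}(\mathbb{R})$ be the spaces of $2$-periodic functions in $H^2_{loc}$, resp. $L^2_{loc}$, with $\int_0^2v\,dx=0$. The extension of $w\in L^2(\Omega)$ is the $2$-periodic function equal to $w(x)$ on $[0,1]$ and $w(2-x)$ on $(1,2)$. For $W=H^2_{per}$ or $L^2_{per}$ let $(T_nv)(x)=-v(x+1/n)$, $W_a=N(T_n-I)$, $W_b=N(T_n^{n-1}+\dots+T_n+I)$, $W_c=N(T_n^n+I)$. For $\tau\in\{a,b,c\}$: $X_\tau=\{u\in X:\text{extension of }u\in W_\tau\subset H^2_{per}\}$, $Y_\tau=\{y\in Y:\text{extension of }\Delta^{-1}y\in W_\tau\subset L^2_{per}\}$. *)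

theory Defs
  imports "HOL-Analysis.Analysis"
begin

definition smooth_fun :: "(real \<Rightarrow> real) \<Rightarrow> bool" where
  "smooth_fun f \<longleftrightarrow> (\<forall>k x. ((deriv ^^ k) f) differentiable (at x))"

definition L2_on :: "real \<Rightarrow> real \<Rightarrow> (real \<Rightarrow> real) \<Rightarrow> bool" where
  "L2_on a b u \<longleftrightarrow> u \<in> borel_measurable (lebesgue_on {a..b}) \<and>
      integrable (lebesgue_on {a..b}) (\<lambda>x. (u x)\<^sup>2)"

definition test_fun :: "real \<Rightarrow> real \<Rightarrow> (real \<Rightarrow> real) \<Rightarrow> bool" where
  "test_fun a b \<phi> \<longleftrightarrow> smooth_fun \<phi> \<and>
      (\<exists>c d. a < c \<and> d < b \<and> (\<forall>x. x \<notin> {c..d} \<longrightarrow> \<phi> x = 0))"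

definition weak_deriv_on :: "real \<Rightarrow> real \<Rightarrow> (real \<Rightarrow> real) \<Rightarrow> (real \<Rightarrow> real) \<Rightarrow> bool" where
  "weak_deriv_on a b u g \<longleftrightarrow> (\<forall>\<phi>. test_fun a b \<phi> \<longrightarrow>
      integral {a..b} (\<lambda>x. u x * deriv \<phi> x) = - integral {a..b} (\<lambda>x. g x * \<phi> x))"

definition H2_on :: "real \<Rightarrow> real \<Rightarrow> (real \<Rightarrow> real) \<Rightarrow> bool" where
  "H2_on a b u \<longleftrightarrow> L2_on a b u \<and> (\<exists>g1 g2. L2_on a b g1 \<and> L2_on a b g2 \<and>
      weak_deriv_on a b u g1 \<and> weak_deriv_on a b g1 g2)"

(* X = {u in H^2(0,1) : u'(0) = u'(1) = 0, int u = 0}; the boundary values refer to the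
   continuous representative of the weak derivative u' *)
definition X_space :: "(real \<Rightarrow> real) \<Rightarrow> bool" where
  "X_space u \<longleftrightarrow> L2_on 0 1 u \<and>
     (\<exists>g1 g2. L2_on 0 1 g1 \<and> L2_on 0 1 g2 \<and> weak_deriv_on 0 1 u g1 \<and> weak_deriv_on 0 1 g1 g2
        \<and> continuous_on {0..1} g1 \<and> g1 0 = 0 \<and> g1 1 = 0) \<and>
     integral {0..1} u = 0"

definition H2_per :: "(real \<Rightarrow> real) \<Rightarrow> bool" where
  "H2_per v \<longleftrightarrow> (\<forall>x. v (x + 2) = v x) \<and> (\<forall>a b. a < b \<longrightarrow> H2_on a b v) \<and>
      integral {0..2} v = 0"

definition L2_per :: "(real \<Rightarrow> real) \<Rightarrow> bool" where
  "L2_per v \<longleftrightarrow> (\<forall>x. v (x + 2) = v x) \<and> (\<forall>a b. a < b \<longrightarrow> L2_on a b v) \<and>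
      integral {0..2} v = 0"

definition ext :: "(real \<Rightarrow> real) \<Rightarrow> real \<Rightarrow> real" where
  "ext w x = (let t = x - 2 * of_int \<lfloor>x / 2\<rfloor> in if t \<le> 1 then w t else w (2 - t))"

definition opT :: "nat \<Rightarrow> (real \<Rightarrow> real) \<Rightarrow> real \<Rightarrow> real" where
  "opT n v = (\<lambda>x. - v (x + 1 / real n))"

datatype subsp = Sa | Sb | Sc

(* the kernel conditions W_a = N(T_n - I), W_b = N(T_n^(n-1)+...+I), W_c = N(T_n^n + I),
   equality being equality of L^2_loc classes (a.e.) *)
definition ker_cond :: "nat \<Rightarrow> subsp \<Rightarrow> (real \<Rightarrow> real) \<Rightarrow> bool" where
  "ker_cond n \<tau> v = (case \<tau> of
      Sa \<Rightarrow> (AE x in lborel. opT n v x - v x = 0)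
    | Sb \<Rightarrow> (AE x in lborel. (\<Sum>k<n. (opT n ^^ k) v x) = 0)
    | Sc \<Rightarrow> (AE x in lborel. (opT n ^^ n) v x + v x = 0))"

definition Xsub :: "nat \<Rightarrow> subsp \<Rightarrow> (real \<Rightarrow> real) \<Rightarrow> bool" where
  "Xsub n \<tau> u \<longleftrightarrow> X_space u \<and> H2_per (ext u) \<and> ker_cond n \<tau> (ext u)"

(* Elements of Y = H^{-2} are represented as functionals on the Neumann test functions
   (smooth, phi'(0) = phi'(1) = 0); Delta h acts by phi |-> int_0^1 h phi''. *)
definition neumann_test :: "(real \<Rightarrow> real) \<Rightarrow> bool" where
  "neumann_test \<phi> \<longleftrightarrow> smooth_fun \<phi> \<and> deriv \<phi> 0 = 0 \<and> deriv \<phi> 1 = 0"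

definition lapD :: "(real \<Rightarrow> real) \<Rightarrow> (real \<Rightarrow> real) \<Rightarrow> real" where
  "lapD h = (\<lambda>\<phi>. integral {0..1} (\<lambda>x. h x * deriv (deriv \<phi>) x))"

(* y in Y_tau: y = Delta h with h mean-zero L^2 (i.e. h = Delta^{-1} y) and ext h in W_tau *)
definition Ysub :: "nat \<Rightarrow> subsp \<Rightarrow> ((real \<Rightarrow> real) \<Rightarrow> real) \<Rightarrow> bool" where
  "Ysub n \<tau> y \<longleftrightarrow> (\<exists>h. L2_on 0 1 h \<and> integral {0..1} h = 0 \<and>
      (\<forall>\<phi>. neumann_test \<phi> \<longrightarrow> y \<phi> = lapD h \<phi>) \<and>
      L2_per (ext h) \<and> ker_cond n \<tau> (ext h))"

definition dsumX :: "((real \<Rightarrow> real) \<Rightarrow> bool) \<Rightarrow> ((real \<Rightarrow> real) \<Rightarrow> bool) \<Rightarrow> (real \<Rightarrow> real) \<Rightarrow> bool" where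
  "dsumX P Q z \<longleftrightarrow> (\<exists>x y. P x \<and> Q y \<and> (AE t in lebesgue_on {0..1}. z t = x t + y t))"

definition dsumY :: "(((real \<Rightarrow> real) \<Rightarrow> real) \<Rightarrow> bool) \<Rightarrow> (((real \<Rightarrow> real) \<Rightarrow> real) \<Rightarrow> bool)
    \<Rightarrow> ((real \<Rightarrow> real) \<Rightarrow> real) \<Rightarrow> bool" where
  "dsumY P Q z \<longleftrightarrow> (\<exists>x y. P x \<and> Q y \<and> (\<forall>\<phi>. neumann_test \<phi> \<longrightarrow> z \<phi> = x \<phi> + y \<phi>))"

definition DuuF :: "(real \<Rightarrow> real) \<Rightarrow> real \<Rightarrow> (real \<Rightarrow> real) \<Rightarrow> (real \<Rightarrow> real) \<Rightarrow> (real \<Rightarrow> real)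
    \<Rightarrow> (real \<Rightarrow> real) \<Rightarrow> real" where
  "DuuF f lam u v w = (\<lambda>\<phi>. - lapD (\<lambda>x. lam * deriv (deriv f) (u x) * v x * w x) \<phi>)"

end

theory Submission
  imports Defs "HOL-Computational_Algebra.Polynomial"
begin

(*
  Membership in the subspaces is a statement about translations of the even 2-periodic extension
  V of a function on [0,1]: W_a consists of the V with V(x + 1/n) = -V(x), W_a + W_b of those with
  V(x + 1) = (-1)^n V(x), and W_c of those with V(x + 1) = -(-1)^n V(x). Such eigenvalue conditions
  multiply under pointwise products. Since f'' is odd and u lies in X_a, f''(u) satisfies the W_a
  condition, and (i), (ii), (iv), (v) follow by multiplying eigenvalues in
  Delta^-1 D_uuF(lam,u)[v,w] = -lam (f''(u) v w - mean). The mean correction disappears whenever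
  the eigenvalue is -1, because antiperiodic functions have mean zero. For (iii), f''(u) v is
  1/n-periodic, and W_b is stable under multiplication by 1/n-periodic functions. In (ii) and (iv)
  the W_a-component of a function with V(x + 1) = (-1)^n V(x) is its alternating average over the
  shifts by k/n.

  The analytic input is that every element of X is essentially bounded: its weak derivative is
  continuous, so by the lemma of du Bois-Reymond it is almost everywhere a primitive of a
  continuous function. Hence all the products involved are square integrable.
*)

lemma smooth_fun_iff_deriv:
  "smooth_fun f \<longleftrightarrow> (\<forall>x. f differentiable (at x)) \<and> smooth_fun (deriv f)"
proof
  assume s: "smooth_fun f"
  have "(deriv ^^ k) (deriv f) differentiable (at x)" for k x
    using s[unfolded smooth_fun_def, rule_format, of "Suc k" x] by (simp only: funpow_Suc_right o_apply)
  then show "(\<forall>x. f differentiable (at x)) \<and> smooth_fun (deriv f)"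
    using s[unfolded smooth_fun_def, rule_format, of 0] by (simp add: smooth_fun_def)
next
  assume a: "(\<forall>x. f differentiable (at x)) \<and> smooth_fun (deriv f)"
  show "smooth_fun f" unfolding smooth_fun_def
  proof (intro allI)
    fix k x show "(deriv ^^ k) f differentiable (at x)"
    proof (cases k)
      case 0 then show ?thesis using a by simp
    next
      case (Suc m)
      have "(deriv ^^ m) (deriv f) differentiable (at x)" using a unfolding smooth_fun_def by blast
      then show ?thesis using Suc by (simp only: funpow_Suc_right o_apply)
    qed
  qed
qed

lemma smooth_fun_differentiable: "smooth_fun f \<Longrightarrow> f differentiable (at x)"
  using smooth_fun_iff_deriv by blast

lemma smooth_fun_deriv: "smooth_fun f \<Longrightarrow> smooth_fun (deriv f)"
  using smooth_fun_iff_deriv by blast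

lemma smooth_fun_DERIV: "smooth_fun f \<Longrightarrow> (f has_real_derivative deriv f x) (at x)"
  by (meson DERIV_deriv_iff_real_differentiable smooth_fun_differentiable)

lemma smooth_fun_isCont: "smooth_fun f \<Longrightarrow> isCont f x"
  by (simp add: differentiable_imp_continuous_within smooth_fun_differentiable)

lemma smooth_fun_continuous_on: "smooth_fun f \<Longrightarrow> continuous_on S f"
  by (simp add: continuous_at_imp_continuous_on smooth_fun_isCont)

lemma smooth_funI_deriv_closed:
  assumes closed: "\<And>g. g \<in> C \<Longrightarrow> (\<forall>x. g differentiable (at x)) \<and> deriv g \<in> C"
    and "f \<in> C"
  shows "smooth_fun f"
proof -
  have "\<forall>g\<in>C. (deriv ^^ k) g \<in> C" for k
  proof (induction k)
    case 0 then show ?case by simp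
  next
    case (Suc k)
    then show ?case using closed by (simp only: funpow_Suc_right o_apply) blast
  qed
  then show ?thesis unfolding smooth_fun_def using closed \<open>f \<in> C\<close> by blast
qed

lemma smooth_fun_primitive:
  assumes "\<And>x. (f has_real_derivative g x) (at x)" and "smooth_fun g"
  shows "smooth_fun f"
proof -
  have "deriv f = g" using assms(1) DERIV_imp_deriv by blast
  then show ?thesis using assms smooth_fun_iff_deriv real_differentiable_def by metis
qed

lemma smooth_fun_const: "smooth_fun (\<lambda>x. c)"
  by (rule smooth_funI_deriv_closed[where C="range (\<lambda>d x. d)"]) auto

text \<open>Products are handled through finite sums of products, a class closed under differentiation.\<close>

definition sum_prods :: "((real \<Rightarrow> real) \<times> (real \<Rightarrow> real)) list \<Rightarrow> real \<Rightarrow> real" where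
  "sum_prods ps x = (\<Sum>(p, q)\<leftarrow>ps. p x * q x)"

definition deriv_prods ::
  "((real \<Rightarrow> real) \<times> (real \<Rightarrow> real)) list \<Rightarrow> ((real \<Rightarrow> real) \<times> (real \<Rightarrow> real)) list" where
  "deriv_prods ps = concat (map (\<lambda>(p, q). [(deriv p, q), (p, deriv q)]) ps)"

lemma sum_prods_DERIV:
  assumes "\<forall>(p, q)\<in>set ps. smooth_fun p \<and> smooth_fun q"
  shows "(sum_prods ps has_real_derivative sum_prods (deriv_prods ps) x) (at x)"
  using assms
proof (induction ps)
  case Nil then show ?case by (simp add: sum_prods_def deriv_prods_def)
next
  case (Cons pq ps)
  obtain p q where pq: "pq = (p, q)" by fastforce
  have "((\<lambda>x. p x * q x) has_real_derivative deriv p x * q x + p x * deriv q x) (at x)"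
    using DERIV_mult[OF smooth_fun_DERIV smooth_fun_DERIV] Cons.prems pq by (simp add: algebra_simps)
  from DERIV_add[OF this Cons.IH] Cons.prems show ?case
    by (simp add: pq sum_prods_def deriv_prods_def algebra_simps)
qed

lemma smooth_fun_sum_prods:
  assumes "\<forall>(p, q)\<in>set ps. smooth_fun p \<and> smooth_fun q"
  shows "smooth_fun (sum_prods ps)"
proof (rule smooth_funI_deriv_closed[where C="{sum_prods qs |qs. \<forall>(p, q)\<in>set qs. smooth_fun p \<and> smooth_fun q}"])
  fix g assume "g \<in> {sum_prods qs |qs. \<forall>(p, q)\<in>set qs. smooth_fun p \<and> smooth_fun q}"
  then obtain qs where g: "g = sum_prods qs" and qs: "\<forall>(p, q)\<in>set qs. smooth_fun p \<and> smooth_fun q"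
    by blast
  have d: "\<And>x. (g has_real_derivative sum_prods (deriv_prods qs) x) (at x)"
    using sum_prods_DERIV[OF qs] g by simp
  moreover have "\<forall>(p, q)\<in>set (deriv_prods qs). smooth_fun p \<and> smooth_fun q"
    using qs by (auto simp: deriv_prods_def smooth_fun_deriv)
  ultimately show "(\<forall>x. g differentiable (at x)) \<and>
      deriv g \<in> {sum_prods qs |qs. \<forall>(p, q)\<in>set qs. smooth_fun p \<and> smooth_fun q}"
    using DERIV_imp_deriv real_differentiable_def by blast
qed (use assms in blast)

lemma smooth_fun_mult:
  assumes "smooth_fun f" "smooth_fun g"
  shows "smooth_fun (\<lambda>x. f x * g x)"
proof -
  have "sum_prods [(f, g)] = (\<lambda>x. f x * g x)" by (simp add: sum_prods_def fun_eq_iff)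
  then show ?thesis using smooth_fun_sum_prods[of "[(f, g)]"] assms by simp
qed

lemma smooth_fun_add:
  assumes "smooth_fun f" "smooth_fun g"
  shows "smooth_fun (\<lambda>x. f x + g x)"
proof -
  have "sum_prods [(f, \<lambda>_. 1), (g, \<lambda>_. 1)] = (\<lambda>x. f x + g x)" by (simp add: sum_prods_def fun_eq_iff)
  then show ?thesis using smooth_fun_sum_prods[of "[(f, \<lambda>_. 1), (g, \<lambda>_. 1)]"] assms smooth_fun_const
    by simp
qed

lemma smooth_fun_cmult: "smooth_fun f \<Longrightarrow> smooth_fun (\<lambda>x. c * f x)"
  using smooth_fun_mult[OF smooth_fun_const] by blast

lemma smooth_fun_diff: "smooth_fun f \<Longrightarrow> smooth_fun g \<Longrightarrow> smooth_fun (\<lambda>x. f x - g x)"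
  using smooth_fun_add[of f "\<lambda>x. (-1) * g x"] smooth_fun_cmult[of g "-1"] by simp

lemma smooth_fun_compose_affine:
  assumes "smooth_fun f"
  shows "smooth_fun (\<lambda>x. f (a * x + b))"
proof (rule smooth_funI_deriv_closed[where C="{\<lambda>x. c * g (a * x + b) |c g. smooth_fun g}"])
  fix h assume "h \<in> {\<lambda>x. c * g (a * x + b) |c g. smooth_fun g}"
  then obtain c g where h: "h = (\<lambda>x. c * g (a * x + b))" and g: "smooth_fun g" by blast
  have d: "(h has_real_derivative (c * a) * deriv g (a * x + b)) (at x)" for x
  proof -
    have "((\<lambda>x. a * x + b) has_real_derivative a) (at x)" by (auto intro!: derivative_eq_intros)
    from DERIV_chain2[OF smooth_fun_DERIV[OF g] this] show ?thesis
      unfolding h by (auto intro!: derivative_eq_intros simp: algebra_simps)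
  qed
  then have "deriv h = (\<lambda>x. (c * a) * deriv g (a * x + b))" using DERIV_imp_deriv by blast
  then show "(\<forall>x. h differentiable (at x)) \<and> deriv h \<in> {\<lambda>x. c * g (a * x + b) |c g. smooth_fun g}"
    using d g smooth_fun_deriv real_differentiable_def by blast
next
  show "(\<lambda>x. f (a * x + b)) \<in> {\<lambda>x. c * g (a * x + b) |c g. smooth_fun g}"
    using assms by (intro CollectI exI[of _ 1] exI[of _ f]) auto
qed

section \<open>Smooth cutoff functions\<close>

lemma poly_times_exp_neg_tendsto_0: "((\<lambda>y. poly q y * exp (- y)) \<longlongrightarrow> (0::real)) at_top"
proof -
  have "((\<lambda>y. \<Sum>i\<le>degree q. coeff q i * (y ^ i / exp y)) \<longlongrightarrow> (\<Sum>i\<le>degree q. coeff q i * 0)) at_top"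
    by (intro tendsto_sum tendsto_mult tendsto_const tendsto_power_div_exp_0)
  moreover have "(\<lambda>y. \<Sum>i\<le>degree q. coeff q i * (y ^ i / exp y)) = (\<lambda>y. poly q y * exp (- y))"
    by (auto simp: fun_eq_iff poly_altdef sum_distrib_right exp_minus divide_inverse mult.assoc)
  ultimately show ?thesis by simp
qed

text \<open>All derivatives of \<open>exp (-1/x)\<close>, extended by \<open>0\<close> to \<open>x \<le> 0\<close>, have this form.\<close>

definition flat_exp :: "real poly \<Rightarrow> real \<Rightarrow> real" where
  "flat_exp p x = (if 0 < x then poly p (inverse x) * exp (- inverse x) else 0)"

lemma flat_exp_DERIV_0: "(flat_exp p has_real_derivative 0) (at 0)"
proof -
  have left: "((\<lambda>h. (flat_exp p (0 + h) - flat_exp p 0) / h) \<longlongrightarrow> 0) (at_left 0)"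
  proof (rule tendsto_eventually)
    have "\<forall>\<^sub>F h in at_left (0::real). h \<in> {-1<..<0}" by (rule eventually_at_left_real) simp
    then show "\<forall>\<^sub>F h in at_left 0. (flat_exp p (0 + h) - flat_exp p 0) / h = 0"
      by eventually_elim (auto simp: flat_exp_def)
  qed
  have right: "((\<lambda>h. (flat_exp p (0 + h) - flat_exp p 0) / h) \<longlongrightarrow> 0) (at_right 0)"
  proof (rule Lim_transform_eventually)
    show "((\<lambda>h. poly ([:0, 1:] * p) (inverse h) * exp (- inverse h)) \<longlongrightarrow> 0) (at_right 0)"
      by (rule filterlim_compose[OF poly_times_exp_neg_tendsto_0 filterlim_inverse_at_top_right])
    have "\<forall>\<^sub>F h in at_right (0::real). h \<in> {0<..<1}" by (rule eventually_at_right_real) simp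
    then show "\<forall>\<^sub>F h in at_right 0. poly ([:0, 1:] * p) (inverse h) * exp (- inverse h) =
        (flat_exp p (0 + h) - flat_exp p 0) / h"
      by eventually_elim (auto simp: flat_exp_def divide_inverse)
  qed
  show ?thesis unfolding DERIV_def using filterlim_split_at[OF left right] by simp
qed

lemma flat_exp_DERIV:
  "(flat_exp p has_real_derivative flat_exp ([:0, 0, 1:] * (p - pderiv p)) x) (at x)"
proof -
  consider "x > 0" | "x < 0" | "x = 0" by linarith
  then show ?thesis
  proof cases
    case 1
    have d: "((\<lambda>x. poly p (inverse x) * exp (- inverse x)) has_real_derivative
       poly (pderiv p) (inverse x) * (- inverse (x^2)) * exp (- inverse x) +
       poly p (inverse x) * (exp (- inverse x) * inverse (x^2))) (at x)"
      using 1 by (auto intro!: derivative_eq_intros DERIV_chain2[OF poly_DERIV] simp: power2_eq_square)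
    have e: "poly (pderiv p) (inverse x) * (- inverse (x^2)) * exp (- inverse x) +
       poly p (inverse x) * (exp (- inverse x) * inverse (x^2)) = flat_exp ([:0, 0, 1:] * (p - pderiv p)) x"
      using 1 by (simp add: flat_exp_def algebra_simps power2_eq_square)
    show ?thesis
      by (rule has_field_derivative_transform_within_open[OF d[unfolded e], of "{0<..}"])
        (use 1 in \<open>auto simp: flat_exp_def\<close>)
  next
    case 2
    have "((\<lambda>x. 0) has_real_derivative flat_exp ([:0, 0, 1:] * (p - pderiv p)) x) (at x)"
      using 2 by (simp add: flat_exp_def)
    then show ?thesis
      by (rule has_field_derivative_transform_within_open[of _ _ _ "{..<0}"]) (use 2 in \<open>auto simp: flat_exp_def\<close>)
  next
    case 3
    then show ?thesis using flat_exp_DERIV_0 by (simp add: flat_exp_def)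
  qed
qed

lemma smooth_fun_flat_exp: "smooth_fun (flat_exp p)"
proof (rule smooth_funI_deriv_closed[where C="range flat_exp"])
  fix g assume "g \<in> range flat_exp"
  then obtain q where g: "g = flat_exp q" by blast
  then have "deriv g = flat_exp ([:0, 0, 1:] * (q - pderiv q))" using flat_exp_DERIV DERIV_imp_deriv by blast
  then show "(\<forall>x. g differentiable (at x)) \<and> deriv g \<in> range flat_exp"
    using flat_exp_DERIV g real_differentiable_def by blast
qed auto

definition bump :: "real \<Rightarrow> real" where
  "bump x = flat_exp 1 x * flat_exp 1 (1 - x)"

lemma smooth_fun_bump: "smooth_fun bump"
proof -
  have "smooth_fun (\<lambda>x. flat_exp 1 ((-1) * x + 1))" by (rule smooth_fun_compose_affine[OF smooth_fun_flat_exp])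
  then show ?thesis unfolding bump_def[abs_def] using smooth_fun_mult[OF smooth_fun_flat_exp] by simp
qed

lemma bump_nonneg: "bump x \<ge> 0"
  by (simp add: bump_def flat_exp_def)

lemma bump_eq_0: "x \<le> 0 \<or> x \<ge> 1 \<Longrightarrow> bump x = 0"
  by (auto simp: bump_def flat_exp_def)

lemma bump_pos: "0 < x \<Longrightarrow> x < 1 \<Longrightarrow> bump x > 0"
  by (simp add: bump_def flat_exp_def)

lemma primitive_DERIV_vanishing_left:
  assumes cont: "\<And>x. isCont \<psi> x" and zero: "\<And>y. y \<le> L \<Longrightarrow> \<psi> y = 0"
  shows "((\<lambda>x. integral {L..x} \<psi>) has_real_derivative \<psi> x) (at x)"
proof -
  define L' where "L' = min x L - 1"
  have co: "continuous_on S \<psi>" for S using cont by (simp add: continuous_at_imp_continuous_on)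
  have zero_int: "integral {L'..t} \<psi> = 0" if "t \<le> L" for t
    using integral_cong[of "{L'..t}" \<psi> "\<lambda>_. 0"] zero that by auto
  have eq: "integral {L'..y} \<psi> = integral {L..y} \<psi>" if "y \<in> {L'<..}" for y
  proof (cases "y \<ge> L")
    case True
    have "integral {L'..y} \<psi> = integral {L'..L} \<psi> + integral {L..y} \<psi>"
      using True L'_def by (intro Henstock_Kurzweil_Integration.integral_combine[symmetric]
          integrable_continuous_real co) auto
    then show ?thesis using zero_int[of L] by simp
  qed (use zero_int in simp)
  have "((\<lambda>y. integral {L'..y} \<psi>) has_real_derivative \<psi> x) (at x within {L'..x+1})"
    by (rule integral_has_real_derivative[OF co]) (auto simp: L'_def)
  then have "((\<lambda>y. integral {L'..y} \<psi>) has_real_derivative \<psi> x) (at x)"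
    by (subst (asm) at_within_Icc_at) (auto simp: L'_def)
  then show ?thesis
    by (rule has_field_derivative_transform_within_open[of _ _ _ "{L'<..}"]) (use eq L'_def in auto)
qed

lemma integral_eq_integral_support:
  fixes \<psi> :: "real \<Rightarrow> real"
  assumes cont: "\<And>x. isCont \<psi> x" and zero: "\<And>x. x \<notin> {c..d} \<Longrightarrow> \<psi> x = 0"
    and "a \<le> c" "d \<le> b"
  shows "integral {a..b} \<psi> = integral {c..d} \<psi>"
proof (cases "c \<le> d")
  case False
  then have "\<psi> = (\<lambda>_. 0)" using zero by auto
  then show ?thesis by simp
next
  case True
  have int: "\<psi> integrable_on {p..q}" for p q
    using cont by (simp add: continuous_at_imp_continuous_on integrable_continuous_real)
  have "integral {a..c} \<psi> = 0" "integral {d..b} \<psi> = 0"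
    using integral_spike[of "{c}" "{a..c}" "\<lambda>_. 0" \<psi>] integral_spike[of "{d}" "{d..b}" "\<lambda>_. 0" \<psi>] zero
    by auto
  moreover have "integral {a..b} \<psi> = integral {a..c} \<psi> + (integral {c..d} \<psi> + integral {d..b} \<psi>)"
    using assms True by (simp add: Henstock_Kurzweil_Integration.integral_combine int)
  ultimately show ?thesis by simp
qed

lemma integral_bump_pos: "integral {0..1} bump > 0"
proof -
  have co: "continuous_on {0..1} bump" using smooth_fun_bump smooth_fun_continuous_on by blast
  have "integral {0..1} bump \<ge> 0"
    by (rule integral_nonneg[OF integrable_continuous_real[OF co]]) (simp add: bump_nonneg)
  moreover have "integral {0..1} bump \<noteq> 0"
    using integral_eq_0_iff[OF co] bump_nonneg bump_pos[of "1/2"] by auto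
  ultimately show ?thesis by simp
qed

definition smooth_step :: "real \<Rightarrow> real" where
  "smooth_step x = integral {0..x} bump / integral {0..1} bump"

lemma smooth_fun_smooth_step: "smooth_fun smooth_step"
proof (rule smooth_fun_primitive)
  show "(smooth_step has_real_derivative bump x / integral {0..1} bump) (at x)" for x
    unfolding smooth_step_def[abs_def]
    by (intro DERIV_cdivide primitive_DERIV_vanishing_left smooth_fun_isCont smooth_fun_bump)
      (simp add: bump_eq_0)
  show "smooth_fun (\<lambda>x. bump x / integral {0..1} bump)"
    using smooth_fun_cmult[OF smooth_fun_bump, of "1 / integral {0..1} bump"] by simp
qed

lemma smooth_step_eq_0: "x \<le> 0 \<Longrightarrow> smooth_step x = 0"
  by (cases "x = 0") (auto simp: smooth_step_def)

lemma smooth_step_eq_1: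
  assumes "x \<ge> 1"
  shows "smooth_step x = 1"
proof -
  have "integral {0..x} bump = integral {0..1} bump"
    by (rule integral_eq_integral_support) (use assms bump_eq_0 smooth_fun_isCont smooth_fun_bump in auto)
  then show ?thesis using integral_bump_pos by (simp add: smooth_step_def)
qed

lemma smooth_step_bounds: "0 \<le> smooth_step x \<and> smooth_step x \<le> 1"
proof -
  have int: "bump integrable_on {p..q}" for p q
    using smooth_fun_bump smooth_fun_continuous_on integrable_continuous_real by blast
  have "0 \<le> integral {0..x} bump" by (rule integral_nonneg[OF int]) (simp add: bump_nonneg)
  moreover have "integral {0..x} bump \<le> integral {0..1} bump" if "x \<le> 1"
    using that by (intro integral_subset_le int) (auto simp: bump_nonneg)
  ultimately show ?thesis
    using smooth_step_eq_1[of x] integral_bump_pos by (cases "x \<le> 1") (auto simp: smooth_step_def)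
qed

definition cutoff :: "real \<Rightarrow> real \<Rightarrow> real \<Rightarrow> real \<Rightarrow> real" where
  "cutoff c d k x = smooth_step (k * (x - c) - 1) * smooth_step (k * (d - x) - 1)"

lemma smooth_fun_cutoff: "smooth_fun (cutoff c d k)"
proof -
  have "smooth_fun (\<lambda>x. smooth_step (k * x + (- k * c - 1)))"
    "smooth_fun (\<lambda>x. smooth_step ((- k) * x + (k * d - 1)))"
    by (rule smooth_fun_compose_affine[OF smooth_fun_smooth_step])+
  from smooth_fun_mult[OF this] show ?thesis unfolding cutoff_def[abs_def] by (simp add: algebra_simps)
qed

lemma cutoff_bounds: "0 \<le> cutoff c d k x \<and> cutoff c d k x \<le> 1"
  using smooth_step_bounds[of "k * (x - c) - 1"] smooth_step_bounds[of "k * (d - x) - 1"]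
  by (auto simp: cutoff_def intro: mult_le_one)

lemma cutoff_eq_0:
  assumes "k > 0" and "x \<le> c + 1 / k \<or> x \<ge> d - 1 / k"
  shows "cutoff c d k x = 0"
proof -
  have "k * (x - c) - 1 \<le> 0 \<or> k * (d - x) - 1 \<le> 0"
    using assms by (auto simp: field_simps)
  then show ?thesis by (auto simp: cutoff_def smooth_step_eq_0)
qed

lemma cutoff_eq_1:
  assumes "k > 0" and "c + 2 / k \<le> x" "x \<le> d - 2 / k"
  shows "cutoff c d k x = 1"
proof -
  have "k * (x - c) - 1 \<ge> 1" "k * (d - x) - 1 \<ge> 1"
    using assms by (auto simp: field_simps)
  then show ?thesis by (auto simp: cutoff_def smooth_step_eq_1)
qed

lemma test_fun_cutoff:
  assumes "a \<le> c" "d \<le> b" "k > 0"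
  shows "test_fun a b (cutoff c d k)"
proof -
  have "1 / k > 0" using assms by simp
  then have "a < c + 1 / k" "d - 1 / k < b" using assms by linarith+
  moreover have "\<forall>x. x \<notin> {c + 1 / k..d - 1 / k} \<longrightarrow> cutoff c d k x = 0"
    using cutoff_eq_0[OF assms(3)] by auto
  ultimately show ?thesis unfolding test_fun_def using smooth_fun_cutoff by blast
qed

lemma cutoff_tendsto_indicator: "(\<lambda>k. cutoff c d (real k) x) \<longlonglongrightarrow> indicator {c<..<d} x"
proof (rule tendsto_eventually)
  show "\<forall>\<^sub>F k in sequentially. cutoff c d (real k) x = indicator {c<..<d} x"
  proof (cases "c < x \<and> x < d")
    case True
    define \<delta> where "\<delta> = min (x - c) (d - x)"
    have "\<delta> > 0" using True by (simp add: \<delta>_def)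
    obtain N :: nat where N: "real N > 2 / \<delta>" using reals_Archimedean2 by blast
    show ?thesis
    proof (rule eventually_sequentiallyI[of N])
      fix k assume "N \<le> k"
      then have k: "real k > 2 / \<delta>" using N by linarith
      then have "real k > 0" using \<open>\<delta> > 0\<close> by (smt (verit) divide_pos_pos)
      moreover have "2 / real k < \<delta>" using k \<open>\<delta> > 0\<close> \<open>real k > 0\<close> by (simp add: field_simps)
      ultimately show "cutoff c d (real k) x = indicator {c<..<d} x"
        using True cutoff_eq_1[of "real k" c x d] by (auto simp: \<delta>_def)
    qed
  next
    case False
    show ?thesis
    proof (rule eventually_sequentiallyI[of 1])
      fix k :: nat assume "1 \<le> k"
      then have "real k > 0" by simp
      then have "x \<le> c + 1 / real k \<or> x \<ge> d - 1 / real k"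
        using False by (smt (verit) divide_pos_pos)
      then show "cutoff c d (real k) x = indicator {c<..<d} x"
        using False \<open>real k > 0\<close> by (subst cutoff_eq_0) auto
    qed
  qed
qed

lemma test_fun_smooth: "test_fun a b \<phi> \<Longrightarrow> smooth_fun \<phi>"
  unfolding test_fun_def by blast

lemma test_fun_vanishes_at_ends:
  assumes "test_fun a b \<phi>" shows "\<phi> a = 0" "\<phi> b = 0"
  using assms unfolding test_fun_def by force+

lemma test_fun_primitive:
  assumes t: "test_fun a b \<psi>" and mean: "integral {a..b} \<psi> = 0"
  shows "test_fun a b (\<lambda>x. integral {a..x} \<psi>)" and "deriv (\<lambda>x. integral {a..x} \<psi>) = \<psi>"
proof -
  obtain c d where cd: "a < c" "d < b" "\<And>x. x \<notin> {c..d} \<Longrightarrow> \<psi> x = 0" and s: "smooth_fun \<psi>"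
    using t unfolding test_fun_def by blast
  have cont: "\<And>x. isCont \<psi> x" using s smooth_fun_isCont by blast
  have D: "((\<lambda>x. integral {a..x} \<psi>) has_real_derivative \<psi> x) (at x)" for x
    by (rule primitive_DERIV_vanishing_left[OF cont]) (use cd in auto)
  show "deriv (\<lambda>x. integral {a..x} \<psi>) = \<psi>" using D DERIV_imp_deriv by blast
  have zero: "integral {a..x} \<psi> = 0" if "x \<notin> {c..d}" for x
  proof (cases "x < c")
    case True
    then show ?thesis using integral_cong[of "{a..x}" \<psi> "\<lambda>_. 0"] cd by (cases "x < a") auto
  next
    case False
    with that have "x > d" by auto
    have "integral {a..x} \<psi> = integral {c..d} \<psi>" "integral {a..b} \<psi> = integral {c..d} \<psi>"
      by (rule integral_eq_integral_support[OF cont cd(3)]; use cd \<open>x > d\<close> in simp)+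
    then show ?thesis using mean by simp
  qed
  show "test_fun a b (\<lambda>x. integral {a..x} \<psi>)"
    unfolding test_fun_def using smooth_fun_primitive[OF D s] zero cd by blast
qed

section \<open>The lemma of du Bois-Reymond\<close>

lemma AE_eq_0_if_tail_integrals_eq_0_lborel:
  fixes F :: "real \<Rightarrow> real"
  assumes F: "integrable lborel F" and [measurable]: "F \<in> borel_measurable borel"
    and tails: "\<And>x. (LINT y|lborel. indicator {x<..} y * F y) = 0"
  shows "AE x in lborel. F x = 0"
proof -
  text \<open>The positive and negative parts of \<open>F\<close> define measures agreeing on all rays.\<close>
  define M1 where "M1 = density lborel (\<lambda>y. ennreal (F y))"
  define M2 where "M2 = density lborel (\<lambda>y. ennreal (- F y))"
  have e1: "emeasure M1 {x<..} = (\<integral>\<^sup>+y. ennreal (indicator {x<..} y * F y) \<partial>lborel)" for x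
    unfolding M1_def by (subst emeasure_density) (auto intro!: nn_integral_cong split: split_indicator)
  have e2: "emeasure M2 {x<..} = (\<integral>\<^sup>+y. ennreal (- (indicator {x<..} y * F y)) \<partial>lborel)" for x
    unfolding M2_def by (subst emeasure_density) (auto intro!: nn_integral_cong split: split_indicator)
  have ig: "integrable lborel (\<lambda>y. indicator {x<..} y * F y)" for x
    using integrable_mult_indicator[of "{x<..}" lborel F] F by simp
  have "M1 = M2"
  proof (rule measure_eqI_lessThan)
    show "sets M1 = sets borel" "sets M2 = sets borel" by (simp_all add: M1_def M2_def)
    fix x
    show "emeasure M1 {x<..} < \<infinity>" using integrableD(2)[OF ig[of x]] e1 by (simp add: top.not_eq_extremum)
    have "enn2real (\<integral>\<^sup>+y. ennreal (indicator {x<..} y * F y) \<partial>lborel)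
        = enn2real (\<integral>\<^sup>+y. ennreal (- (indicator {x<..} y * F y)) \<partial>lborel)"
      using tails[of x] real_lebesgue_integral_def[OF ig[of x]] by simp
    moreover have "(\<integral>\<^sup>+y. ennreal (indicator {x<..} y * F y) \<partial>lborel) < top"
       "(\<integral>\<^sup>+y. ennreal (- (indicator {x<..} y * F y)) \<partial>lborel) < top"
      using integrableD(2,3)[OF ig[of x]] by (simp_all add: top.not_eq_extremum)
    ultimately show "emeasure M1 {x<..} = emeasure M2 {x<..}"
      using e1 e2 by (metis ennreal_enn2real)
  qed
  then have "AE y in lborel. ennreal (F y) = ennreal (- F y)"
    unfolding M1_def M2_def by (intro sigma_finite_measure.density_unique[OF sigma_finite_lborel]) auto
  then show ?thesis
    by eventually_elim (smt (verit) ennreal_eq_0_iff ennreal_inj)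
qed

lemma AE_eq_0_if_tail_integrals_eq_0:
  fixes F :: "real \<Rightarrow> real"
  assumes F: "integrable lebesgue F"
    and tails: "\<And>x. (LINT y|lebesgue. indicator {x<..} y * F y) = 0"
  shows "AE x in lebesgue. F x = 0"
proof -
  have Fm: "F \<in> borel_measurable (completion lborel)" using F by auto
  obtain F' where F'm: "F' \<in> borel_measurable lborel" and ae: "AE x in lborel. F x = F' x"
    using completion_ex_borel_measurable_real[OF Fm] by blast
  have F'm': "F' \<in> borel_measurable borel" using F'm by simp
  have aeL: "AE x in lebesgue. F x = F' x" using AE_completion[OF ae] .
  have "integrable lebesgue F'" using integrable_cong_AE_imp[OF F _ aeL] F'm
    by (simp add: measurable_completion)
  then have iF': "integrable lborel F'" using integrable_completion[OF F'm] by simp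
  have "(LINT y|lborel. indicator {x<..} y * F' y) = 0" for x
  proof -
    have i: "indicator {x<..} \<in> borel_measurable lebesgue"
      by (rule borel_measurable_indicator) simp
    have "(LINT y|lebesgue. indicator {x<..} y * F y) = (LINT y|lebesgue. indicator {x<..} y * F' y)"
      using aeL Fm F'm i
      by (intro integral_cong_AE borel_measurable_times) (auto simp: measurable_completion elim!: eventually_mono)
    also have "\<dots> = (LINT y|lborel. indicator {x<..} y * F' y)"
      using F'm' by (intro integral_completion) simp
    finally show ?thesis using tails[of x] by simp
  qed
  from AE_eq_0_if_tail_integrals_eq_0_lborel[OF iF' F'm' this] have "AE y in lebesgue. F' y = 0"
    by (rule AE_completion)
  with aeL show ?thesis by eventually_elim simp
qed

lemma integrable_mult_continuous_on:
  fixes f c :: "real \<Rightarrow> real"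
  assumes f: "integrable (lebesgue_on {a..b}) f" and c: "continuous_on {a..b} c"
  shows "integrable (lebesgue_on {a..b}) (\<lambda>x. f x * c x)"
proof -
  obtain B where "B \<ge> 0" and B: "\<And>x. x \<in> {a..b} \<Longrightarrow> \<bar>c x\<bar> \<le> B"
    using continuous_on_compact_bound[OF compact_Icc c] by auto
  have "integrable (lebesgue_on {a..b}) (\<lambda>x. B * f x)" using f by simp
  then show ?thesis
  proof (rule Bochner_Integration.integrable_bound)
    show "(\<lambda>x. f x * c x) \<in> borel_measurable (lebesgue_on {a..b})"
      using f continuous_imp_measurable_on_sets_lebesgue[OF c] by (intro borel_measurable_times) auto
    show "AE x in lebesgue_on {a..b}. norm (f x * c x) \<le> norm (B * f x)"
    proof (rule AE_I2)
      fix x assume "x \<in> space (lebesgue_on {a..b})"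
      then have "\<bar>f x\<bar> * \<bar>c x\<bar> \<le> \<bar>f x\<bar> * B" using B by (intro mult_left_mono) auto
      then show "norm (f x * c x) \<le> norm (B * f x)" using \<open>B \<ge> 0\<close> by (simp add: abs_mult mult.commute)
    qed
  qed
qed

lemma integrable_on_mult_smooth_fun:
  assumes "integrable (lebesgue_on {a..b}) w" "smooth_fun \<xi>"
  shows "(\<lambda>x. w x * \<xi> x) integrable_on {a..b}"
  by (intro integrable_on_lebesgue_on integrable_mult_continuous_on smooth_fun_continuous_on assms) simp

lemma test_fun_lincomb:
  assumes "test_fun a b \<phi>" "test_fun a b \<psi>"
  shows "test_fun a b (\<lambda>x. \<phi> x - c * \<psi> x)"
proof -
  obtain c1 d1 c2 d2 where cd: "a < c1" "d1 < b" "\<And>x. x \<notin> {c1..d1} \<Longrightarrow> \<phi> x = 0"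
    "a < c2" "d2 < b" "\<And>x. x \<notin> {c2..d2} \<Longrightarrow> \<psi> x = 0"
    using assms unfolding test_fun_def by metis
  have "\<forall>x. x \<notin> {min c1 c2..max d1 d2} \<longrightarrow> \<phi> x - c * \<psi> x = 0"
  proof (intro allI impI)
    fix x assume "x \<notin> {min c1 c2..max d1 d2}"
    then have "x \<notin> {c1..d1}" "x \<notin> {c2..d2}" by auto
    then show "\<phi> x - c * \<psi> x = 0" using cd by simp
  qed
  moreover have "smooth_fun (\<lambda>x. \<phi> x - c * \<psi> x)"
    using assms by (intro smooth_fun_diff smooth_fun_cmult test_fun_smooth)
  ultimately show ?thesis unfolding test_fun_def using cd by (metis max_less_iff_conj min_less_iff_conj)
qed

lemma test_fun_integral_pos:
  assumes "a < b"
  obtains \<rho> where "test_fun a b \<rho>" "integral {a..b} \<rho> > 0"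
proof
  define k where "k = 4 / (b - a)"
  have k: "k > 0" using assms by (simp add: k_def)
  show t: "test_fun a b (cutoff a b k)" by (rule test_fun_cutoff) (use k in auto)
  have co: "continuous_on {a..b} (cutoff a b k)"
    using smooth_fun_continuous_on test_fun_smooth[OF t] by blast
  have "integral {a..b} (cutoff a b k) \<ge> 0"
    by (rule integral_nonneg[OF integrable_continuous_real[OF co]]) (simp add: cutoff_bounds)
  moreover have "cutoff a b k ((a + b) / 2) = 1"
    using assms by (intro cutoff_eq_1 k) (auto simp: k_def field_simps)
  then have "integral {a..b} (cutoff a b k) \<noteq> 0"
    using integral_eq_0_iff[OF co] cutoff_bounds assms by fastforce
  ultimately show "integral {a..b} (cutoff a b k) > 0" by simp
qed

lemma tail_integrals_eq_0_if_orthogonal_test_funs: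
  fixes w :: "real \<Rightarrow> real"
  assumes w: "integrable (lebesgue_on {a..b}) w"
    and orth: "\<And>\<xi>. test_fun a b \<xi> \<Longrightarrow> integral {a..b} (\<lambda>x. w x * \<xi> x) = 0"
    and "a \<le> c"
  shows "integral\<^sup>L (lebesgue_on {a..b}) (\<lambda>x. indicator {c<..<b} x * w x) = 0"
proof -
  let ?M = "lebesgue_on {a..b}"
  define ch where "ch k = cutoff c b (real (Suc k))" for k
  have tch: "test_fun a b (ch k)" for k unfolding ch_def by (rule test_fun_cutoff) (use \<open>a \<le> c\<close> in auto)
  have cch: "continuous_on {a..b} (ch k)" for k using smooth_fun_continuous_on test_fun_smooth[OF tch] by blast
  have "indicator {c<..<b} \<in> borel_measurable lebesgue"
    by (rule borel_measurable_indicator) simp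
  then have mind: "indicator {c<..<b} \<in> borel_measurable ?M"
    by (rule measurable_restrict_space1)
  have "(\<lambda>k. integral\<^sup>L ?M (\<lambda>x. w x * ch k x)) \<longlonglongrightarrow> integral\<^sup>L ?M (\<lambda>x. w x * indicator {c<..<b} x)"
  proof (rule integral_dominated_convergence[where w="\<lambda>x. norm (w x)"])
    show "(\<lambda>x. w x * indicator {c<..<b} x) \<in> borel_measurable ?M"
      using w mind by (intro borel_measurable_times) auto
    show "(\<lambda>x. w x * ch k x) \<in> borel_measurable ?M" for k
      using w continuous_imp_measurable_on_sets_lebesgue[OF cch] by (intro borel_measurable_times) auto
    show "integrable ?M (\<lambda>x. norm (w x))" using w by simp
    show "AE x in ?M. (\<lambda>k. w x * ch k x) \<longlonglongrightarrow> w x * indicator {c<..<b} x"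
      unfolding ch_def using LIMSEQ_Suc[OF cutoff_tendsto_indicator]
      by (intro AE_I2 tendsto_mult tendsto_const) auto
    show "AE x in ?M. norm (w x * ch k x) \<le> norm (w x)" for k
      using cutoff_bounds unfolding ch_def by (intro AE_I2) (simp add: abs_mult mult_left_le)
  qed
  moreover have "integral\<^sup>L ?M (\<lambda>x. w x * ch k x) = 0" for k
    using lebesgue_integral_eq_integral[OF integrable_mult_continuous_on[OF w cch]] orth[OF tch] by simp
  ultimately have "(\<lambda>k. 0) \<longlonglongrightarrow> integral\<^sup>L ?M (\<lambda>x. w x * indicator {c<..<b} x)" by simp
  then show ?thesis by (simp add: LIMSEQ_const_iff mult.commute)
qed

lemma AE_eq_0_if_orthogonal_test_funs:
  fixes w :: "real \<Rightarrow> real"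
  assumes w: "integrable (lebesgue_on {a..b}) w"
    and orth: "\<And>\<xi>. test_fun a b \<xi> \<Longrightarrow> integral {a..b} (\<lambda>x. w x * \<xi> x) = 0"
  shows "AE x in lebesgue_on {a..b}. w x = 0"
proof -
  let ?M = "lebesgue_on {a..b}"
  define F where "F y = indicator {a..b} y * w y" for y
  have "(\<lambda>y. if y \<in> {a..b} then w y else 0) = F" by (auto simp: F_def fun_eq_iff)
  then have F: "integrable lebesgue F"
    using Lebesgue_Measure.integrable_restrict_UNIV[of "{a..b}" w] w by simp
  have "(LINT y|lebesgue. indicator {x<..} y * F y) = 0" for x
  proof (cases "x < b")
    case False
    then have "(\<lambda>y. indicator {x<..} y * F y) = (\<lambda>y. 0)"
      by (auto simp: F_def fun_eq_iff split: split_indicator)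
    then show ?thesis by simp
  next
    case True
    define c where "c = max x a"
    have ends: "AE y in lebesgue. y \<notin> {a, b}"
      by (rule AE_not_in) (simp add: null_sets_completionI finite_imp_null_set_lborel)
    have "(LINT y|lebesgue. indicator {x<..} y * F y) =
          (LINT y|lebesgue. (if y \<in> {a..b} then indicator {c<..<b} y * w y else 0))"
    proof (rule integral_cong_AE)
      show "(\<lambda>y. indicator {x<..} y * F y) \<in> borel_measurable lebesgue"
        using F by (intro borel_measurable_times borel_measurable_indicator) auto
      have "indicator {c<..<b} \<in> borel_measurable lebesgue"
        by (rule borel_measurable_indicator) simp
      then have "(\<lambda>y. indicator {c<..<b} y * w y) \<in> borel_measurable ?M"
        using w by (intro borel_measurable_times[OF measurable_restrict_space1]) auto
      then show "(\<lambda>y. if y \<in> {a..b} then indicator {c<..<b} y * w y else 0) \<in> borel_measurable lebesgue"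
        by (rule borel_measurable_if_I) simp
      show "AE y in lebesgue. indicator {x<..} y * F y =
          (if y \<in> {a..b} then indicator {c<..<b} y * w y else 0)"
        using ends by eventually_elim (auto simp: F_def c_def indicator_def)
    qed
    also have "\<dots> = integral\<^sup>L ?M (\<lambda>y. indicator {c<..<b} y * w y)"
      by (rule Lebesgue_Measure.integral_restrict_UNIV) simp
    finally show ?thesis using tail_integrals_eq_0_if_orthogonal_test_funs[OF w orth, of c] by (simp add: c_def)
  qed
  from AE_eq_0_if_tail_integrals_eq_0[OF F this] have "AE t in lebesgue. t \<in> {a..b} \<longrightarrow> w t = 0"
    by eventually_elim (auto simp: F_def)
  then show ?thesis by (subst AE_restrict_space_iff) auto
qed

lemma du_Bois_Reymond:
  fixes w :: "real \<Rightarrow> real"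
  assumes "a < b" and w: "integrable (lebesgue_on {a..b}) w"
    and orth: "\<And>\<phi>. test_fun a b \<phi> \<Longrightarrow> integral {a..b} (\<lambda>x. w x * deriv \<phi> x) = 0"
  obtains K where "AE x in lebesgue_on {a..b}. w x = K"
proof -
  obtain \<rho> where t\<rho>: "test_fun a b \<rho>" and r: "integral {a..b} \<rho> > 0"
    using test_fun_integral_pos[OF \<open>a < b\<close>] .
  define K where "K = integral {a..b} (\<lambda>x. w x * \<rho> x) / integral {a..b} \<rho>"
  have "integral {a..b} (\<lambda>x. (w x - K) * \<xi> x) = 0" if t\<xi>: "test_fun a b \<xi>" for \<xi>
  proof -
    define \<alpha> where "\<alpha> = integral {a..b} \<xi> / integral {a..b} \<rho>"
    have t\<psi>: "test_fun a b (\<lambda>x. \<xi> x - \<alpha> * \<rho> x)" by (rule test_fun_lincomb[OF t\<xi> t\<rho>])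
    have int: "\<xi> integrable_on {a..b}" "\<rho> integrable_on {a..b}"
      using t\<xi> t\<rho> by (auto intro!: integrable_continuous_real smooth_fun_continuous_on test_fun_smooth)
    have wint: "(\<lambda>x. w x * \<xi> x) integrable_on {a..b}" "(\<lambda>x. w x * \<rho> x) integrable_on {a..b}"
      using t\<xi> t\<rho> by (auto intro!: integrable_on_mult_smooth_fun w test_fun_smooth)
    have "integral {a..b} (\<lambda>x. \<xi> x - \<alpha> * \<rho> x) = integral {a..b} \<xi> - \<alpha> * integral {a..b} \<rho>"
      using int by (simp add: integral_diff integrable_on_mult_right)
    then have "integral {a..b} (\<lambda>x. \<xi> x - \<alpha> * \<rho> x) = 0"
      using r by (simp add: \<alpha>_def)
    from test_fun_primitive[OF t\<psi> this] orth
    have "integral {a..b} (\<lambda>x. w x * (\<xi> x - \<alpha> * \<rho> x)) = 0" by metis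
    then have "integral {a..b} (\<lambda>x. w x * \<xi> x) = \<alpha> * integral {a..b} (\<lambda>x. w x * \<rho> x)"
      using wint by (simp add: right_diff_distrib integral_diff integrable_on_mult_right mult.left_commute)
    moreover have "integral {a..b} (\<lambda>x. (w x - K) * \<xi> x) =
        integral {a..b} (\<lambda>x. w x * \<xi> x) - K * integral {a..b} \<xi>"
      using wint int by (simp add: left_diff_distrib integral_diff integrable_on_mult_right)
    ultimately show ?thesis by (simp add: K_def \<alpha>_def)
  qed
  then have "AE x in lebesgue_on {a..b}. w x - K = 0"
    using w by (intro AE_eq_0_if_orthogonal_test_funs) auto
  then show ?thesis by (intro that[of K]) auto
qed

lemma weak_deriv_on_continuous_imp_AE_primitive:
  assumes "a < b" and u: "integrable (lebesgue_on {a..b}) u"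
    and wd: "weak_deriv_on a b u g" and g: "continuous_on {a..b} g"
  obtains K where "AE x in lebesgue_on {a..b}. u x = K + integral {a..x} g"
proof -
  define G where "G x = integral {a..x} g" for x
  have G: "continuous_on {a..b} G"
    unfolding G_def[abs_def] by (rule indefinite_integral_continuous_1[OF integrable_continuous_real[OF g]])
  have "integral {a..b} (\<lambda>x. (u x - G x) * deriv \<phi> x) = 0" if t: "test_fun a b \<phi>" for \<phi>
  proof -
    have s: "smooth_fun \<phi>" using t by (rule test_fun_smooth)
    have cd: "continuous_on {a..b} (deriv \<phi>)" using smooth_fun_continuous_on smooth_fun_deriv[OF s] by blast
    have "((\<lambda>x. g x * \<phi> x + G x * deriv \<phi> x) has_integral (G b * \<phi> b - G a * \<phi> a)) {a..b}"
    proof (rule fundamental_theorem_of_calculus)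
      fix x assume x: "x \<in> {a..b}"
      have "(G has_real_derivative g x) (at x within {a..b})"
        unfolding G_def[abs_def] by (rule integral_has_real_derivative[OF g x])
      from DERIV_mult'[OF this has_field_derivative_at_within[OF smooth_fun_DERIV[OF s]]]
      show "((\<lambda>x. G x * \<phi> x) has_vector_derivative g x * \<phi> x + G x * deriv \<phi> x) (at x within {a..b})"
        by (simp add: has_real_derivative_iff_has_vector_derivative[symmetric] algebra_simps)
    qed (use \<open>a < b\<close> in simp)
    then have "integral {a..b} (\<lambda>x. g x * \<phi> x + G x * deriv \<phi> x) = 0"
      using test_fun_vanishes_at_ends[OF t] by (simp add: integral_unique)
    moreover have "(\<lambda>x. g x * \<phi> x) integrable_on {a..b}" "(\<lambda>x. G x * deriv \<phi> x) integrable_on {a..b}"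
      by (intro integrable_continuous_real continuous_intros g G cd smooth_fun_continuous_on s)+
    moreover have "(\<lambda>x. u x * deriv \<phi> x) integrable_on {a..b}"
      by (intro integrable_on_mult_smooth_fun u smooth_fun_deriv s)
    ultimately show ?thesis
      using wd t unfolding weak_deriv_on_def by (simp add: left_diff_distrib integral_diff integral_add)
  qed
  moreover have "integrable (lebesgue_on {a..b}) (\<lambda>x. u x - G x)"
    using u continuous_imp_integrable_real[OF G] by simp
  ultimately obtain K where "AE x in lebesgue_on {a..b}. u x - G x = K"
    using du_Bois_Reymond[OF \<open>a < b\<close>] by blast
  then show ?thesis by (intro that[of K]) (auto simp: G_def elim!: eventually_mono)
qed

lemma L2_on_integrable:
  assumes "L2_on a b u"
  shows "integrable (lebesgue_on {a..b}) u"
proof -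
  have m: "u \<in> borel_measurable (lebesgue_on {a..b})" and sq: "integrable (lebesgue_on {a..b}) (\<lambda>x. (u x)\<^sup>2)"
    using assms by (auto simp: L2_on_def)
  have "integrable (lebesgue_on {a..b}) (\<lambda>x. 1 + (u x)\<^sup>2)" using sq by simp
  then show ?thesis
  proof (rule Bochner_Integration.integrable_bound)
    have "\<bar>y\<bar> \<le> 1 + y\<^sup>2" for y :: real
    proof (cases "\<bar>y\<bar> \<le> 1")
      case False
      then have "\<bar>y\<bar> * 1 \<le> \<bar>y\<bar> * \<bar>y\<bar>" by (intro mult_left_mono) auto
      then show ?thesis by (simp add: power2_eq_square)
    qed (smt (verit) zero_le_power2)
    then show "AE x in lebesgue_on {a..b}. norm (u x) \<le> norm (1 + (u x)\<^sup>2)"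
      by (intro AE_I2) simp
  qed (rule m)
qed

lemma X_space_AE_bounded:
  assumes "X_space u"
  obtains M where "AE t in lebesgue_on {0..1}. \<bar>u t\<bar> \<le> M"
proof -
  obtain g where u: "L2_on 0 1 u" and wd: "weak_deriv_on 0 1 u g" and g: "continuous_on {0..1} g"
    using assms unfolding X_space_def by blast
  obtain K where K: "AE t in lebesgue_on {0..1}. u t = K + integral {0..t} g"
    using weak_deriv_on_continuous_imp_AE_primitive[OF _ L2_on_integrable[OF u] wd g] by auto
  have "continuous_on {0..1} (\<lambda>t. integral {0..t} g)"
    by (rule indefinite_integral_continuous_1[OF integrable_continuous_real[OF g]])
  then obtain B where B: "\<And>t. t \<in> {0..1} \<Longrightarrow> \<bar>integral {0..t} g\<bar> \<le> B"
    using continuous_on_compact_bound[OF compact_Icc] by (metis real_norm_def)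
  have "AE t in lebesgue_on {0..1}. t \<in> {0..1}" by (rule AE_I2) simp
  with K have "AE t in lebesgue_on {0..1}. \<bar>u t\<bar> \<le> \<bar>K\<bar> + B"
    by eventually_elim (use B in force)
  then show ?thesis by (rule that)
qed

section \<open>The even \<open>2\<close>-periodic extension\<close>

definition fold_unit :: "real \<Rightarrow> real" where
  "fold_unit x = (let t = x - 2 * of_int \<lfloor>x / 2\<rfloor> in if t \<le> 1 then t else 2 - t)"

lemma ext_eq_fold_unit: "ext w x = w (fold_unit x)"
  by (simp add: ext_def fold_unit_def Let_def)

lemma fold_unit_cases:
  "0 \<le> fold_unit x \<and> fold_unit x \<le> 1 \<and> (\<exists>m::int. x = 2 * of_int m + fold_unit x \<or> x = 2 * of_int m - fold_unit x)"
proof -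
  define m where "m = \<lfloor>x / 2\<rfloor>"
  define t where "t = x - 2 * of_int m"
  have "of_int m \<le> x / 2" "x / 2 < of_int m + 1" unfolding m_def by linarith+
  then have t: "0 \<le> t" "t < 2" unfolding t_def by linarith+
  have r: "fold_unit x = (if t \<le> 1 then t else 2 - t)" by (simp add: fold_unit_def t_def m_def Let_def)
  show ?thesis
  proof (cases "t \<le> 1")
    case True
    then show ?thesis using t r by (auto simp: t_def intro!: exI[of _ m])
  next
    case False
    then show ?thesis using t r by (auto simp: t_def intro!: exI[of _ "m + 1"])
  qed
qed

lemma fold_unit_eqI:
  assumes s: "0 \<le> s" "s \<le> 1" and x: "x = 2 * of_int m + s \<or> x = 2 * of_int m - s"
  shows "fold_unit x = s"
proof -
  consider "x = 2 * of_int m + s" | "x = 2 * of_int m - s" "s = 0" | "x = 2 * of_int m - s" "s > 0"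
    using x s by force
  then show ?thesis
  proof cases
    case 1
    have "\<lfloor>x / 2\<rfloor> = m" using 1 s by (intro floor_unique) auto
    then show ?thesis using 1 s by (simp add: fold_unit_def Let_def)
  next
    case 2
    have "\<lfloor>x / 2\<rfloor> = m" using 2 s by (intro floor_unique) auto
    then show ?thesis using 2 s by (simp add: fold_unit_def Let_def)
  next
    case 3
    have "\<lfloor>x / 2\<rfloor> = m - 1" using 3 s by (intro floor_unique) auto
    then show ?thesis using 3 s by (auto simp: fold_unit_def Let_def)
  qed
qed

lemma fold_unit_bounds: "0 \<le> fold_unit x" "fold_unit x \<le> 1"
  using fold_unit_cases by auto

lemma fold_unit_id: "0 \<le> x \<Longrightarrow> x \<le> 1 \<Longrightarrow> fold_unit x = x"
  by (rule fold_unit_eqI[of x x 0]) auto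

lemma fold_unit_uminus: "fold_unit (- x) = fold_unit x"
proof -
  obtain m :: int where "x = 2 * of_int m + fold_unit x \<or> x = 2 * of_int m - fold_unit x"
    using fold_unit_cases by blast
  then have "- x = 2 * of_int (- m) + fold_unit x \<or> - x = 2 * of_int (- m) - fold_unit x" by auto
  then show ?thesis by (intro fold_unit_eqI[of _ _ "- m"]) (auto simp: fold_unit_bounds)
qed

lemma fold_unit_add_even_int: "fold_unit (x + 2 * of_int k) = fold_unit x"
proof -
  obtain m :: int where "x = 2 * of_int m + fold_unit x \<or> x = 2 * of_int m - fold_unit x"
    using fold_unit_cases by blast
  then have "x + 2 * of_int k = 2 * of_int (m + k) + fold_unit x \<or>
      x + 2 * of_int k = 2 * of_int (m + k) - fold_unit x" by auto
  then show ?thesis by (intro fold_unit_eqI[of _ _ "m + k"]) (auto simp: fold_unit_bounds)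
qed

lemma fold_unit_reflection: "\<exists>m::int. fold_unit x = x - 2 * of_int m \<or> fold_unit x = 2 * of_int m - x"
  using fold_unit_cases[of x] by (metis add_diff_cancel_left' diff_diff_eq2)

lemma ext_add_2: "ext w (x + 2) = ext w x"
  using fold_unit_add_even_int[of x 1] by (simp add: ext_eq_fold_unit)

lemma ext_uminus: "ext w (- x) = ext w x"
  by (simp add: ext_eq_fold_unit fold_unit_uminus)

lemma ext_eq_self: "0 \<le> x \<Longrightarrow> x \<le> 1 \<Longrightarrow> ext w x = w x"
  by (simp add: ext_eq_fold_unit fold_unit_id)

lemma ext_eq_if_even_periodic:
  fixes P :: "real \<Rightarrow> real"
  assumes per: "\<And>y. P (y + 2) = P y" and even: "P (- x) = P x"
  shows "ext P x = P x"
proof -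
  have per_int: "P (y + 2 * of_int k) = P y" for y and k :: int
  proof -
    have nat: "P (y + 2 * real m) = P y" for y m
    proof (induction m arbitrary: y)
      case (Suc m)
      have "P (y + 2 * real (Suc m)) = P ((y + 2 * real m) + 2)" by (simp add: algebra_simps)
      then show ?case using per Suc by simp
    qed simp
    show ?thesis
    proof (cases "k \<ge> 0")
      case True
      then show ?thesis using nat[of y "nat k"] by simp
    next
      case False
      then show ?thesis using nat[of "y + 2 * of_int k" "nat (- k)"] by simp
    qed
  qed
  obtain k :: int where "fold_unit x = x - 2 * of_int k \<or> fold_unit x = 2 * of_int k - x"
    using fold_unit_reflection by blast
  then show ?thesis
    using per_int[of x "- k"] per_int[of "- x" k] even by (auto simp: ext_eq_fold_unit)
qed

lemma AE_lebesgue_affine: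
  fixes P :: "real \<Rightarrow> bool"
  assumes c: "c \<noteq> 0" and ae: "AE x in lebesgue. P x"
  shows "AE x in lebesgue. P (t + c * x)"
proof -
  obtain N where N: "N \<in> null_sets lborel" "{x \<in> space lborel. \<not> P x} \<subseteq> N"
    using ae by (auto simp: AE_completion_iff null_sets_def elim!: AE_E)
  have "AE x in lborel. t + c * x \<notin> N"
    using N(1) by (intro AE_borel_affine[OF c] AE_not_in) (auto simp: null_sets_def)
  then have "AE x in lborel. P (t + c * x)" by (rule eventually_mono) (use N(2) in auto)
  then show ?thesis by (rule AE_completion)
qed

lemma AE_lebesgue_shift:
  fixes P :: "real \<Rightarrow> bool"
  shows "AE x in lebesgue. P x \<Longrightarrow> AE x in lebesgue. P (x + s)"
  using AE_lebesgue_affine[of 1 P s] by (simp add: add.commute)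

lemma AE_fold_unit:
  assumes "AE t in lebesgue_on {0..1}. Q t"
  shows "AE x in lebesgue. Q (fold_unit x)"
proof -
  have Q: "AE t in lebesgue. t \<in> {0..1} \<longrightarrow> Q t"
    using assms by (subst (asm) AE_restrict_space_iff) auto
  have "AE x in lebesgue. \<forall>m::int. x - 2 * of_int m \<in> {0..1} \<longrightarrow> Q (x - 2 * of_int m)"
    unfolding AE_all_countable using AE_lebesgue_affine[of 1 _ "- 2 * of_int _", OF _ Q] by simp
  moreover have "AE x in lebesgue. \<forall>m::int. 2 * of_int m - x \<in> {0..1} \<longrightarrow> Q (2 * of_int m - x)"
    unfolding AE_all_countable using AE_lebesgue_affine[of "-1" _ "2 * of_int _", OF _ Q] by simp
  ultimately show ?thesis
  proof eventually_elim
    case (elim x)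
    obtain m :: int where "fold_unit x = x - 2 * of_int m \<or> fold_unit x = 2 * of_int m - x"
      using fold_unit_reflection by blast
    then show ?case using elim fold_unit_bounds[of x] by auto
  qed
qed

definition ess_bounded :: "(real \<Rightarrow> real) \<Rightarrow> bool" where
  "ess_bounded f \<longleftrightarrow> f \<in> borel_measurable lebesgue \<and> (\<exists>M. AE x in lebesgue. \<bar>f x\<bar> \<le> M)"

lemma ess_bounded_const: "ess_bounded (\<lambda>x. c)"
  unfolding ess_bounded_def by (auto intro!: exI[of _ "\<bar>c\<bar>"])

lemma ess_bounded_add: "ess_bounded f \<Longrightarrow> ess_bounded g \<Longrightarrow> ess_bounded (\<lambda>x. f x + g x)"
  unfolding ess_bounded_def
proof (elim conjE exE, intro conjI)
  fix M N assume "AE x in lebesgue. \<bar>f x\<bar> \<le> M" "AE x in lebesgue. \<bar>g x\<bar> \<le> N"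
  then have "AE x in lebesgue. \<bar>f x + g x\<bar> \<le> M + N" by eventually_elim auto
  then show "\<exists>M. AE x in lebesgue. \<bar>f x + g x\<bar> \<le> M" ..
qed auto

lemma ess_bounded_mult: "ess_bounded f \<Longrightarrow> ess_bounded g \<Longrightarrow> ess_bounded (\<lambda>x. f x * g x)"
  unfolding ess_bounded_def
proof (elim conjE exE, intro conjI)
  fix M N assume "AE x in lebesgue. \<bar>f x\<bar> \<le> M" "AE x in lebesgue. \<bar>g x\<bar> \<le> N"
  then have "AE x in lebesgue. \<bar>f x * g x\<bar> \<le> M * N"
    by eventually_elim (simp add: abs_mult mult_mono')
  then show "\<exists>M. AE x in lebesgue. \<bar>f x * g x\<bar> \<le> M" ..
qed auto

lemma ess_bounded_cmult: "ess_bounded f \<Longrightarrow> ess_bounded (\<lambda>x. c * f x)"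
  using ess_bounded_mult[OF ess_bounded_const] by blast

lemma ess_bounded_diff: "ess_bounded f \<Longrightarrow> ess_bounded g \<Longrightarrow> ess_bounded (\<lambda>x. f x - g x)"
  using ess_bounded_add[OF _ ess_bounded_cmult[of g "-1"], of f] by simp

lemma ess_bounded_sum:
  "finite I \<Longrightarrow> (\<And>i. i \<in> I \<Longrightarrow> ess_bounded (f i)) \<Longrightarrow> ess_bounded (\<lambda>x. \<Sum>i\<in>I. f i x)"
  by (induction I rule: finite_induct) (auto simp: ess_bounded_const ess_bounded_add)

lemma ess_bounded_compose:
  assumes F: "continuous_on UNIV F" and f: "ess_bounded f"
  shows "ess_bounded (\<lambda>x. F (f x))"
proof -
  obtain M where m: "f \<in> borel_measurable lebesgue" and M: "AE x in lebesgue. \<bar>f x\<bar> \<le> M"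
    using f unfolding ess_bounded_def by blast
  obtain B where B: "\<And>y. y \<in> {-M..M} \<Longrightarrow> \<bar>F y\<bar> \<le> B"
    using continuous_on_compact_bound[OF compact_Icc continuous_on_subset[OF F subset_UNIV]]
    by (metis real_norm_def)
  have "AE x in lebesgue. \<bar>F (f x)\<bar> \<le> B" using M by eventually_elim (intro B, auto)
  moreover have "(\<lambda>x. F (f x)) \<in> borel_measurable lebesgue" by (rule borel_measurable_continuous_on[OF F m])
  ultimately show ?thesis unfolding ess_bounded_def by blast
qed

lemma ess_bounded_shift:
  assumes "ess_bounded f"
  shows "ess_bounded (\<lambda>x. f (x + s))"
proof -
  have "(\<lambda>x::real. s + (\<Sum>j\<in>Basis. ((\<lambda>_. 1) j * (x \<bullet> j)) *\<^sub>R j)) \<in> lebesgue \<rightarrow>\<^sub>M lebesgue"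
    by (rule lebesgue_affine_measurable) simp
  then have shift: "(\<lambda>x::real. x + s) \<in> lebesgue \<rightarrow>\<^sub>M lebesgue" by (simp add: add.commute)
  obtain M where f: "f \<in> borel_measurable lebesgue" and M: "AE x in lebesgue. \<bar>f x\<bar> \<le> M"
    using assms unfolding ess_bounded_def by blast
  have "(\<lambda>x. f (x + s)) \<in> borel_measurable lebesgue" by (rule measurable_compose[OF shift f])
  with AE_lebesgue_shift[OF M] show ?thesis unfolding ess_bounded_def by blast
qed

lemma ess_bounded_AE_cong: "ess_bounded f \<Longrightarrow> AE x in lebesgue. g x = f x \<Longrightarrow> ess_bounded g"
  unfolding ess_bounded_def
proof (elim conjE exE, intro conjI)
  fix M assume m: "f \<in> borel_measurable lebesgue" and a: "AE x in lebesgue. \<bar>f x\<bar> \<le> M"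
    and e: "AE x in lebesgue. g x = f x"
  show "g \<in> borel_measurable lebesgue"
    by (rule borel_measurable_AE[OF m]) (use e in \<open>eventually_elim, simp\<close>)
  have "AE x in lebesgue. \<bar>g x\<bar> \<le> M" using a e by eventually_elim simp
  then show "\<exists>M. AE x in lebesgue. \<bar>g x\<bar> \<le> M" ..
qed

lemma ess_bounded_integrable:
  assumes "ess_bounded f"
  shows "integrable (lebesgue_on {a..b}) f"
proof -
  obtain M where m: "f \<in> borel_measurable lebesgue" and M: "AE x in lebesgue. \<bar>f x\<bar> \<le> M"
    using assms unfolding ess_bounded_def by blast
  interpret finite_measure "lebesgue_on {a..b}" by (rule finite_measure_lebesgue_on) simp
  show ?thesis
  proof (rule integrable_const_bound[where B=M])
    show "AE x in lebesgue_on {a..b}. norm (f x) \<le> M"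
      using M by (subst AE_restrict_space_iff) (auto elim!: eventually_mono)
    show "f \<in> borel_measurable (lebesgue_on {a..b})" using m by (rule measurable_restrict_space1)
  qed
qed

lemma ess_bounded_integrable_on: "ess_bounded f \<Longrightarrow> f integrable_on {a..b}"
  by (simp add: ess_bounded_integrable integrable_on_lebesgue_on)

lemma ess_bounded_L2_on:
  assumes "ess_bounded f"
  shows "L2_on a b f"
proof -
  have "integrable (lebesgue_on {a..b}) (\<lambda>x. f x * f x)"
    by (intro ess_bounded_integrable ess_bounded_mult assms)
  moreover have "f \<in> borel_measurable (lebesgue_on {a..b})"
    using assms unfolding ess_bounded_def by (auto intro: measurable_restrict_space1)
  ultimately show ?thesis unfolding L2_on_def by (simp add: power2_eq_square)
qed

lemma borel_measurable_lebesgue_if_locally: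
  fixes f :: "real \<Rightarrow> real"
  assumes "\<And>a b. a < b \<Longrightarrow> f \<in> borel_measurable (lebesgue_on {a..b})"
  shows "f \<in> borel_measurable lebesgue"
proof -
  define u where "u i x = (if x \<in> {- real i - 1..real i + 1} then f x else 0)" for i x
  have "u i \<in> borel_measurable lebesgue" for i
    unfolding u_def by (rule borel_measurable_if_I[OF assms]) auto
  moreover have "(\<lambda>i. u i x) \<longlonglongrightarrow> f x" for x
  proof (rule tendsto_eventually)
    obtain N :: nat where "real N \<ge> \<bar>x\<bar>" using real_arch_simple by blast
    then show "\<forall>\<^sub>F i in sequentially. u i x = f x"
      by (intro eventually_sequentiallyI[of N]) (auto simp: u_def)
  qed
  ultimately show ?thesis by (intro borel_measurable_LIMSEQ_real[of lebesgue u f]) auto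
qed

lemma ess_bounded_ext:
  assumes "X_space u" "H2_per (ext u)"
  shows "ess_bounded (ext u)"
proof -
  obtain M where "AE t in lebesgue_on {0..1}. \<bar>u t\<bar> \<le> M"
    using X_space_AE_bounded[OF assms(1)] .
  then have "AE x in lebesgue. \<bar>ext u x\<bar> \<le> M"
    unfolding ext_eq_fold_unit by (rule AE_fold_unit)
  moreover have "ext u \<in> borel_measurable lebesgue"
    using assms(2) unfolding H2_per_def H2_on_def L2_on_def by (intro borel_measurable_lebesgue_if_locally) blast
  ultimately show ?thesis unfolding ess_bounded_def by blast
qed

section \<open>Eigenfunctions of translations\<close>

lemma integral_eq_if_AE_eq:
  assumes "AE x in lebesgue. f x = g x"
  shows "integral S f = integral S g"
proof -
  obtain N where N: "{x \<in> space lebesgue. f x \<noteq> g x} \<subseteq> N" "emeasure lebesgue N = 0" "N \<in> sets lebesgue"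
    using assms by (rule AE_E)
  then have "negligible N" by (simp add: negligible_iff_null_sets null_sets_def)
  then show ?thesis by (rule integral_spike) (use N(1) in force)
qed

lemma integral_periodic_shift:
  fixes f :: "real \<Rightarrow> real"
  assumes int: "\<And>a b. f integrable_on {a..b}" and per: "\<And>x. f (x + p) = f x" and "0 \<le> s" "s \<le> p"
  shows "integral {0..p} (\<lambda>x. f (x + s)) = integral {0..p} f"
proof -
  have shift: "integral {a..b} (\<lambda>x. f (x + c)) = integral {a + c..b + c} f" for a b c
    using integral_shift_Icc_real[of a b f c] by (simp add: o_def add.commute)
  have "integral {0..p} (\<lambda>x. f (x + s)) = integral {s..p} f + integral {p..p + s} f"
    using assms shift[of 0 p s] by (simp add: Henstock_Kurzweil_Integration.integral_combine int)
  also have "integral {p..p + s} f = integral {0..s} f"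
    using shift[of 0 s p] per by (simp add: add.commute)
  also have "integral {s..p} f + integral {0..s} f = integral {0..p} f"
    using assms Henstock_Kurzweil_Integration.integral_combine[OF _ _ int, of 0 s p] by simp
  finally show ?thesis .
qed

lemma integral_ext:
  assumes int: "ext h integrable_on {0..2}"
  shows "h integrable_on {0..1}" "integral {0..2} (ext h) = 2 * integral {0..1} h"
proof -
  have int': "ext h integrable_on {a..b}" if "{a..b} \<subseteq> {0..2}" for a b
    using integrable_subinterval_real[OF int that] .
  have eq: "integral {0..1} (ext h) = integral {0..1} h"
    by (rule integral_cong) (auto simp: ext_eq_self)
  show "h integrable_on {0..1}"
    using int'[of 0 1] by (rule integrable_eq) (auto simp: ext_eq_self)
  have "integral {1..2} (ext h) = integral {1..2} (\<lambda>x. ext h (- (x - 2)))"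
    by (simp add: ext_uminus ext_add_2[of h "- _", simplified])
  also have "\<dots> = integral {0..1} (ext h)"
    using integral_shift_Icc_real[of 1 2 "\<lambda>x. ext h (- x)" "-2"] Henstock_Kurzweil_Integration.integral_reflect_real[of 1 0 "ext h"]
    by (simp add: o_def)
  finally have "integral {1..2} (ext h) = integral {0..1} (ext h)" .
  moreover have "integral {0..2} (ext h) = integral {0..1} (ext h) + integral {1..2} (ext h)"
    by (intro Henstock_Kurzweil_Integration.integral_combine[symmetric] int) auto
  ultimately show "integral {0..2} (ext h) = 2 * integral {0..1} h" using eq by simp
qed

definition shift_eigen :: "real \<Rightarrow> real \<Rightarrow> (real \<Rightarrow> real) \<Rightarrow> bool" where
  "shift_eigen s c V \<longleftrightarrow> (AE x in lebesgue. V (x + s) = c * V x)"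

lemma shift_eigen_mult: "shift_eigen s c V \<Longrightarrow> shift_eigen s d W \<Longrightarrow> shift_eigen s (c * d) (\<lambda>x. V x * W x)"
  unfolding shift_eigen_def by (rule eventually_elim2) (auto simp: algebra_simps)

lemma shift_eigen_cmult: "shift_eigen s c V \<Longrightarrow> shift_eigen s c (\<lambda>x. d * V x)"
  unfolding shift_eigen_def by (erule eventually_mono) (auto simp: algebra_simps)

lemma shift_eigen_add: "shift_eigen s c V \<Longrightarrow> shift_eigen s c W \<Longrightarrow> shift_eigen s c (\<lambda>x. V x + W x)"
  unfolding shift_eigen_def by (rule eventually_elim2) (auto simp: algebra_simps)

lemma shift_eigen_affine: "shift_eigen s c V \<Longrightarrow> c = 1 \<or> e = 0 \<Longrightarrow> shift_eigen s c (\<lambda>x. d * V x + e)"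
  unfolding shift_eigen_def by (erule eventually_mono) (auto simp: algebra_simps)

lemma shift_eigen_AE_cong:
  assumes "shift_eigen s c V" and eq: "AE x in lebesgue. W x = V x"
  shows "shift_eigen s c W"
  using assms(1) eq AE_lebesgue_shift[OF eq, of s] unfolding shift_eigen_def by eventually_elim simp

lemma shift_eigen_iterate:
  assumes "shift_eigen s c V"
  shows "shift_eigen (real k * s) (c ^ k) V"
proof (induction k)
  case (Suc k)
  have "AE x in lebesgue. V ((x + real k * s) + s) = c * V (x + real k * s)"
    using AE_lebesgue_shift[OF assms[unfolded shift_eigen_def]] .
  with Suc.IH show ?case unfolding shift_eigen_def
    by eventually_elim (simp add: algebra_simps)
qed (simp add: shift_eigen_def)

lemma shift_eigen_compose_odd:
  assumes "shift_eigen s (-1) V" and "\<And>y. F (- y) = - F y"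
  shows "shift_eigen s (-1) (\<lambda>x. F (V x))"
  using assms unfolding shift_eigen_def by (auto elim!: eventually_mono)

lemma shift_eigen_integral_eq_0:
  assumes int: "\<And>a b. V integrable_on {a..b}" and per: "\<And>x. V (x + p) = V x"
    and "0 \<le> s" "s \<le> p" and "shift_eigen s (-1) V"
  shows "integral {0..p} V = 0"
proof -
  have "integral {0..p} V = integral {0..p} (\<lambda>x. V (x + s))"
    using integral_periodic_shift[OF int per \<open>0 \<le> s\<close> \<open>s \<le> p\<close>] by simp
  also have "\<dots> = integral {0..p} (\<lambda>x. - V x)"
    using \<open>shift_eigen s (-1) V\<close> unfolding shift_eigen_def by (intro integral_eq_if_AE_eq) simp
  finally show ?thesis by (simp add: integral_neg)
qed

lemma opT_funpow: "(opT n ^^ k) v = (\<lambda>x. (-1) ^ k * v (x + real k / real n))"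
proof (induction k)
  case (Suc k)
  show ?case
  proof
    fix x
    have "(opT n ^^ Suc k) v x = - ((-1) ^ k * v (x + 1 / real n + real k / real n))"
      by (simp add: opT_def Suc)
    also have "x + 1 / real n + real k / real n = x + real (Suc k) / real n"
      by (simp add: add_divide_distrib)
    finally show "(opT n ^^ Suc k) v x = (-1) ^ Suc k * v (x + real (Suc k) / real n)" by simp
  qed
qed simp

lemma ker_cond_Sa_iff: "ker_cond n Sa V \<longleftrightarrow> shift_eigen (1 / real n) (-1) V"
proof -
  have "opT n V x - V x = 0 \<longleftrightarrow> V (x + 1 / real n) = - 1 * V x" for x
    by (auto simp: opT_def)
  then show ?thesis by (simp add: ker_cond_def shift_eigen_def AE_completion_iff)
qed

lemma ker_cond_Sb_iff:
  "ker_cond n Sb V \<longleftrightarrow> (AE x in lebesgue. (\<Sum>k<n. (-1) ^ k * V (x + real k / real n)) = 0)"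
  by (simp only: ker_cond_def subsp.case opT_funpow AE_completion_iff)

lemma neg_one_power_mult_eq_iff: "(-1) ^ n * a = b \<longleftrightarrow> a = (-1) ^ n * (b :: real)"
  by auto

lemma ker_cond_Sc_iff:
  assumes "n \<ge> 1"
  shows "ker_cond n Sc V \<longleftrightarrow> shift_eigen 1 (- ((-1) ^ n)) V"
proof -
  have "(-1) ^ n * V (x + 1) + V x = 0 \<longleftrightarrow> V (x + 1) = - ((-1) ^ n) * V x" for x
  proof -
    have "(-1) ^ n * V (x + 1) + V x = 0 \<longleftrightarrow> (-1) ^ n * V (x + 1) = - V x" by linarith
    then show ?thesis by (auto simp: neg_one_power_mult_eq_iff)
  qed
  then show ?thesis
    using assms by (simp add: ker_cond_def shift_eigen_def AE_completion_iff opT_funpow)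
qed

lemma alternating_shift_sum_step:
  fixes V :: "real \<Rightarrow> real"
  assumes "n \<ge> 1"
  shows "(\<Sum>k<n. (-1) ^ k * V (x + 1 / real n + real k / real n)) =
         - (\<Sum>k<n. (-1) ^ k * V (x + real k / real n)) + V x - (-1) ^ n * V (x + 1)"
proof -
  define b where "b k = (-1::real) ^ k * V (x + real k / real n)" for k
  have "(-1) ^ k * V (x + 1 / real n + real k / real n) = - b (Suc k)" for k
    by (simp add: b_def add_divide_distrib algebra_simps)
  then have "(\<Sum>k<n. (-1) ^ k * V (x + 1 / real n + real k / real n)) = - (\<Sum>k<n. b (Suc k))"
    by (simp add: sum_negf)
  also have "(\<Sum>k<n. b (Suc k)) = (\<Sum>k<n. b k) + b n - b 0"
    using sum.lessThan_Suc_shift[of b n] by simp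
  finally show ?thesis using assms by (simp add: b_def)
qed

lemma ker_cond_Sb_imp_shift_eigen:
  assumes n: "n \<ge> 1" and "ker_cond n Sb V"
  shows "shift_eigen 1 ((-1) ^ n) V"
proof -
  define S where "S x = (\<Sum>k<n. (-1) ^ k * V (x + real k / real n))" for x
  have S: "AE x in lebesgue. S x = 0" using assms(2) by (simp add: ker_cond_Sb_iff S_def)
  show ?thesis unfolding shift_eigen_def using S AE_lebesgue_shift[OF S, of "1 / real n"]
  proof eventually_elim
    case (elim x)
    have "S (x + 1 / real n) = - S x + V x - (-1) ^ n * V (x + 1)"
      unfolding S_def using alternating_shift_sum_step[OF n, of V x] by (simp add: add.assoc)
    then have "(-1) ^ n * V (x + 1) = V x" using elim by simp
    then show ?case by (metis left_minus_one_mult_self)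
  qed
qed

lemma ess_bounded_integrable_ext:
  assumes "ess_bounded (ext h)"
  shows "integrable (lebesgue_on {0..1}) h"
proof -
  have "integrable (lebesgue_on {0..1}) (ext h) \<longleftrightarrow> integrable (lebesgue_on {0..1}) h"
    by (rule Bochner_Integration.integrable_cong) (auto simp: ext_eq_self)
  then show ?thesis using ess_bounded_integrable[OF assms] by simp
qed

lemma Ysub_intro:
  assumes h: "ess_bounded (ext h)" and mean: "integral {0..1} h = 0" and ker: "ker_cond n \<tau> (ext h)"
    and y: "\<And>\<phi>. neumann_test \<phi> \<Longrightarrow> y \<phi> = lapD h \<phi>"
  shows "Ysub n \<tau> y"
proof -
  have L: "L2_on 0 1 (ext h)" by (rule ess_bounded_L2_on[OF h])
  have "h \<in> borel_measurable (lebesgue_on {0..1})"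
    using L unfolding L2_on_def by (subst measurable_lebesgue_cong[where g="ext h"]) (auto simp: ext_eq_self)
  moreover have "integrable (lebesgue_on {0..1}) (\<lambda>x. (ext h x)\<^sup>2) \<longleftrightarrow> integrable (lebesgue_on {0..1}) (\<lambda>x. (h x)\<^sup>2)"
    by (rule Bochner_Integration.integrable_cong) (auto simp: ext_eq_self)
  ultimately have "L2_on 0 1 h" using L unfolding L2_on_def by blast
  moreover have "L2_per (ext h)" unfolding L2_per_def
    using ext_add_2 ess_bounded_L2_on[OF h] integral_ext(2)[OF ess_bounded_integrable_on[OF h]] mean by auto
  ultimately show ?thesis unfolding Ysub_def using mean y ker by blast
qed

lemma integral_deriv2_neumann_test:
  assumes "neumann_test \<phi>"
  shows "integral {0..1} (deriv (deriv \<phi>)) = 0"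
proof -
  have s: "smooth_fun \<phi>" and ends: "deriv \<phi> 0 = 0" "deriv \<phi> 1 = 0"
    using assms by (auto simp: neumann_test_def)
  have "(deriv (deriv \<phi>) has_integral (deriv \<phi> 1 - deriv \<phi> 0)) {0..1}"
  proof (rule fundamental_theorem_of_calculus)
    show "(deriv \<phi> has_vector_derivative deriv (deriv \<phi>) x) (at x within {0..1})" for x
      using smooth_fun_DERIV[OF smooth_fun_deriv[OF s], of x]
      by (simp add: has_real_derivative_iff_has_vector_derivative[symmetric] has_field_derivative_at_within)
  qed simp
  then show ?thesis using ends by (simp add: integral_unique)
qed

lemma lapD_integrable:
  assumes "neumann_test \<phi>" and "integrable (lebesgue_on {0..1}) g"
  shows "(\<lambda>x. g x * deriv (deriv \<phi>) x) integrable_on {0..1}"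
  using assms by (intro integrable_on_mult_smooth_fun smooth_fun_deriv) (auto simp: neumann_test_def)

lemma lapD_add:
  assumes "neumann_test \<phi>" and "integrable (lebesgue_on {0..1}) g" "integrable (lebesgue_on {0..1}) h"
  shows "lapD (\<lambda>x. g x + h x) \<phi> = lapD g \<phi> + lapD h \<phi>"
  using integral_add[OF lapD_integrable[OF assms(1,2)] lapD_integrable[OF assms(1,3)]]
  by (simp add: lapD_def algebra_simps)

lemma lapD_cmult_add_const:
  assumes "neumann_test \<phi>" and g: "integrable (lebesgue_on {0..1}) g"
  shows "lapD (\<lambda>x. a * g x + c) \<phi> = a * lapD g \<phi>"
proof -
  have "deriv (deriv \<phi>) integrable_on {0..1}"
    using lapD_integrable[OF assms(1), of "\<lambda>_. 1"] by simp
  then have "lapD (\<lambda>x. a * g x + c) \<phi> = a * lapD g \<phi> + c * integral {0..1} (deriv (deriv \<phi>))"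
    using lapD_integrable[OF assms]
    by (simp add: lapD_def distrib_right integral_add integrable_on_mult_right mult.assoc)
  then show ?thesis using integral_deriv2_neumann_test[OF assms(1)] by simp
qed

text \<open>If \<open>V (x + 1) = (-1)\<^sup>n V x\<close>, then \<open>alt_avg n V\<close> is the component of \<open>V\<close> in \<open>W\<^sub>a\<close>
  and \<open>V - alt_avg n V\<close> lies in \<open>W\<^sub>b\<close>.\<close>

definition alt_avg :: "nat \<Rightarrow> (real \<Rightarrow> real) \<Rightarrow> real \<Rightarrow> real" where
  "alt_avg n V x = (\<Sum>k<n. (-1) ^ k * V (x + real k / real n)) / real n"

lemma ess_bounded_alt_avg: "ess_bounded V \<Longrightarrow> ess_bounded (alt_avg n V)"
  unfolding alt_avg_def divide_inverse
  by (subst mult.commute) (intro ess_bounded_cmult ess_bounded_sum ess_bounded_shift; simp)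

lemma alt_avg_add_period: "(\<And>y. V (y + p) = V y) \<Longrightarrow> alt_avg n V (x + p) = alt_avg n V x"
  unfolding alt_avg_def by (metis (no_types, lifting) add.commute add.left_commute)

lemma shift_eigen_alt_avg:
  assumes n: "n \<ge> 1" and V: "shift_eigen 1 ((-1) ^ n) V"
  shows "shift_eigen (1 / real n) (-1) (alt_avg n V)"
  unfolding shift_eigen_def using V[unfolded shift_eigen_def]
proof eventually_elim
  case (elim x)
  have "(-1) ^ n * V (x + 1) = V x" using elim by simp
  then show ?case
    using alternating_shift_sum_step[OF n, of V x] by (simp add: alt_avg_def add.assoc diff_divide_distrib)
qed

lemma alt_avg_reflect:
  assumes n: "n \<ge> 1" and even: "\<And>y. V (- y) = V y"
  shows "alt_avg n V (x - real (n - 1) / real n) = (-1) ^ (n - 1) * alt_avg n V (- x)"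
proof -
  have "(\<Sum>k<n. (-1) ^ k * V (x - real (n - 1) / real n + real k / real n)) =
      (\<Sum>i<n. (-1) ^ (n - Suc i) * V (x - real (n - 1) / real n + real (n - Suc i) / real n))"
    by (rule sum.nat_diff_reindex[symmetric])
  also have "\<dots> = (\<Sum>i<n. (-1) ^ (n - 1) * ((-1) ^ i * V (- x + real i / real n)))"
  proof (rule sum.cong[OF refl])
    fix i assume i: "i \<in> {..<n}"
    have "x - real (n - 1) / real n + real (n - Suc i) / real n = - (- x + real i / real n)"
      using i n by (simp add: of_nat_diff field_simps)
    then have "V (x - real (n - 1) / real n + real (n - Suc i) / real n) = V (- x + real i / real n)"
      by (simp only: even)
    moreover have "(-1::real) ^ (n - 1) = (-1) ^ (n - Suc i) * (-1) ^ i"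
      using i by (simp add: power_add[symmetric])
    then have "(-1::real) ^ (n - Suc i) = (-1) ^ (n - 1) * (-1) ^ i"
      by (metis left_minus_one_mult_self mult.commute)
    ultimately show "(-1) ^ (n - Suc i) * V (x - real (n - 1) / real n + real (n - Suc i) / real n) =
        (-1) ^ (n - 1) * ((-1) ^ i * V (- x + real i / real n))"
      by simp
  qed
  finally show ?thesis by (simp add: alt_avg_def sum_distrib_left)
qed

lemma AE_alt_avg_even:
  assumes n: "n \<ge> 1" and even: "\<And>y. V (- y) = V y" and V: "shift_eigen 1 ((-1) ^ n) V"
  shows "AE x in lebesgue. alt_avg n V (- x) = alt_avg n V x"
proof -
  define c where "c = real (n - 1) / real n"
  have "shift_eigen c ((-1) ^ (n - 1)) (alt_avg n V)"
    using shift_eigen_iterate[OF shift_eigen_alt_avg[OF n V], of "n - 1"] by (simp add: c_def power_minus1_even)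
  then have "AE x in lebesgue. alt_avg n V (x + - c + c) = (-1) ^ (n - 1) * alt_avg n V (x + - c)"
    unfolding shift_eigen_def by (rule AE_lebesgue_shift)
  then show ?thesis
  proof eventually_elim
    case (elim x)
    then have "alt_avg n V x = (-1) ^ (n - 1) * alt_avg n V (x - c)" by simp
    also have "\<dots> = alt_avg n V (- x)"
      using alt_avg_reflect[of n V x, OF n even] by (simp add: c_def)
    finally show ?case by simp
  qed
qed

lemma ker_cond_Sb_diff_alt_avg:
  assumes n: "n \<ge> 1" and V: "shift_eigen 1 ((-1) ^ n) V"
  shows "AE x in lebesgue. (\<Sum>k<n. (-1) ^ k * (V (x + real k / real n) - alt_avg n V (x + real k / real n))) = 0"
proof -
  have "\<forall>k\<in>{..<n}. AE x in lebesgue. alt_avg n V (x + real k / real n) = (-1) ^ k * alt_avg n V x"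
    using shift_eigen_iterate[OF shift_eigen_alt_avg[OF n V]] by (simp add: shift_eigen_def)
  then have "AE x in lebesgue. \<forall>k\<in>{..<n}. alt_avg n V (x + real k / real n) = (-1) ^ k * alt_avg n V x"
    by (subst AE_finite_all) auto
  then show ?thesis
  proof eventually_elim
    case (elim x)
    then have "(\<Sum>k<n. (-1) ^ k * (V (x + real k / real n) - alt_avg n V (x + real k / real n))) =
        (\<Sum>k<n. (-1) ^ k * V (x + real k / real n) - alt_avg n V x)"
      by (intro sum.cong) (auto simp: right_diff_distrib)
    also have "\<dots> = 0" using n by (simp add: sum_subtractf alt_avg_def)
    finally show ?case .
  qed
qed

lemma AE_ext_alt_avg:
  assumes n: "n \<ge> 1" and H: "shift_eigen 1 ((-1) ^ n) (ext h)"
  shows "AE x in lebesgue. ext (alt_avg n (ext h)) x = alt_avg n (ext h) x"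
proof -
  have per: "alt_avg n (ext h) (x + 2) = alt_avg n (ext h) x" for x
    by (rule alt_avg_add_period) (rule ext_add_2)
  show ?thesis
    using AE_alt_avg_even[OF n ext_uminus H]
    by eventually_elim (rule ext_eq_if_even_periodic[of "alt_avg n (ext h)", OF per])
qed

lemma dsumY_intro:
  assumes n: "n \<ge> 1" and h: "ess_bounded (ext h)" and mean: "integral {0..1} h = 0"
    and H: "shift_eigen 1 ((-1) ^ n) (ext h)"
    and y: "\<And>\<phi>. neumann_test \<phi> \<Longrightarrow> y \<phi> = lapD h \<phi>"
  shows "dsumY (Ysub n Sa) (Ysub n Sb) y"
proof -
  define P where "P = alt_avg n (ext h)"
  define hb where "hb = (\<lambda>x. h x - P x)"
  have P: "AE x in lebesgue. ext P x = P x" unfolding P_def by (rule AE_ext_alt_avg[OF n H])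
  have bP: "ess_bounded (ext P)"
    using ess_bounded_AE_cong[OF ess_bounded_alt_avg[OF h, of n, folded P_def] P] .
  have eb: "ext hb = (\<lambda>x. ext h x - ext P x)" by (simp add: hb_def fun_eq_iff ext_eq_fold_unit)
  have bb: "ess_bounded (ext hb)" unfolding eb by (intro ess_bounded_diff h bP)
  have "shift_eigen (1 / real n) (-1) (ext P)"
    using shift_eigen_AE_cong[OF shift_eigen_alt_avg[OF n H, folded P_def] P] .
  then have kP: "ker_cond n Sa (ext P)" by (simp add: ker_cond_Sa_iff)
  have "integral {0..2} (ext P) = 0"
    using shift_eigen_integral_eq_0[OF ess_bounded_integrable_on[OF bP] ext_add_2 _ _ \<open>shift_eigen _ _ (ext P)\<close>] n
    by (simp add: divide_le_eq)
  then have mP: "integral {0..1} P = 0" using integral_ext(2)[OF ess_bounded_integrable_on[OF bP]] by simp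
  have mb: "integral {0..1} hb = 0"
    using mean mP integral_diff[OF integral_ext(1)[OF ess_bounded_integrable_on[OF h]]
        integral_ext(1)[OF ess_bounded_integrable_on[OF bP]]] by (simp add: hb_def)
  have "AE x in lebesgue. \<forall>k\<in>{..<n}. ext P (x + real k / real n) = P (x + real k / real n)"
    by (subst AE_finite_all) (auto intro: AE_lebesgue_shift[OF P])
  with ker_cond_Sb_diff_alt_avg[OF n H] have kb: "ker_cond n Sb (ext hb)"
    unfolding ker_cond_Sb_iff
  proof eventually_elim
    case (elim x)
    have "(\<Sum>k<n. (-1) ^ k * ext hb (x + real k / real n)) =
        (\<Sum>k<n. (-1) ^ k * (ext h (x + real k / real n) - alt_avg n (ext h) (x + real k / real n)))"
      using elim(2) by (intro sum.cong) (auto simp: eb P_def)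
    then show ?case using elim(1) by simp
  qed
  have "y \<phi> = lapD P \<phi> + lapD hb \<phi>" if "neumann_test \<phi>" for \<phi>
  proof -
    have "lapD P \<phi> + lapD hb \<phi> = lapD (\<lambda>x. P x + hb x) \<phi>"
      using that bP bb by (intro lapD_add[symmetric]) (auto intro: ess_bounded_integrable_ext)
    then show ?thesis using y[OF that] by (simp add: hb_def)
  qed
  then show ?thesis
    unfolding dsumY_def using Ysub_intro[OF bP mP kP] Ysub_intro[OF bb mb kb] by blast
qed

lemma deriv_reflect:
  fixes g :: "real \<Rightarrow> real"
  assumes sym: "\<And>x. g (- x) = c * g x" and diff: "\<And>x. g differentiable (at x)"
  shows "deriv g (- x) = - c * deriv g x"
proof -
  have "((\<lambda>x. g (- x)) has_real_derivative deriv g (- x) * (-1)) (at x)"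
    by (rule DERIV_chain2[OF DERIV_deriv_iff_real_differentiable[THEN iffD2, OF diff]])
       (auto intro!: derivative_eq_intros)
  moreover have "((\<lambda>x. c * g x) has_real_derivative c * deriv g x) (at x)"
    by (intro DERIV_cmult DERIV_deriv_iff_real_differentiable[THEN iffD2, OF diff])
  moreover have "(\<lambda>x. g (- x)) = (\<lambda>x. c * g x)" using sym by auto
  ultimately have "deriv g (- x) * (-1) = c * deriv g x" using DERIV_unique by metis
  then show ?thesis by simp
qed

lemma deriv2_odd:
  assumes f: "smooth_fun f" and odd: "\<forall>x. f (- x) = - f x"
  shows "deriv (deriv f) (- y) = - deriv (deriv f) y"
proof -
  have "deriv f (- x) = deriv f x" for x
    using deriv_reflect[of f "-1" x] odd smooth_fun_differentiable[OF f] by auto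
  then show ?thesis
    using deriv_reflect[of "deriv f" 1 y] smooth_fun_differentiable[OF smooth_fun_deriv[OF f]] by auto
qed

definition d2f_prod :: "(real \<Rightarrow> real) \<Rightarrow> (real \<Rightarrow> real) \<Rightarrow> (real \<Rightarrow> real) \<Rightarrow> (real \<Rightarrow> real) \<Rightarrow> real \<Rightarrow> real"
  where "d2f_prod f u v w x = deriv (deriv f) (u x) * v x * w x"

definition centered :: "(real \<Rightarrow> real) \<Rightarrow> real \<Rightarrow> real" where
  "centered g x = g x - integral {0..1} g"

lemma ext_d2f_prod: "ext (d2f_prod f u v w) = (\<lambda>x. deriv (deriv f) (ext u x) * ext v x * ext w x)"
  by (simp add: fun_eq_iff ext_eq_fold_unit d2f_prod_def)

lemma ext_centered: "ext (centered g) = (\<lambda>x. ext g x - integral {0..1} g)"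
  by (simp add: fun_eq_iff ext_eq_fold_unit centered_def)

lemma integral_centered:
  assumes "g integrable_on {0..1}"
  shows "integral {0..1} (centered g) = 0"
  using integral_diff[OF assms integrable_const_ivl[of "integral {0..1} g" 0 1]]
  by (simp add: centered_def[abs_def])

lemma ker_cond_cmult:
  assumes "ker_cond n \<tau> V"
  shows "ker_cond n \<tau> (\<lambda>x. c * V x)"
proof (cases \<tau>)
  case Sa
  then show ?thesis using assms by (simp add: ker_cond_Sa_iff shift_eigen_cmult)
next
  case Sb
  have "(\<Sum>k<n. (-1) ^ k * (c * V (x + real k / real n))) = c * (\<Sum>k<n. (-1) ^ k * V (x + real k / real n))"
    for x by (simp add: sum_distrib_left mult.left_commute)
  then show ?thesis using Sb assms by (auto simp: ker_cond_def opT_funpow elim!: eventually_mono)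
next
  case Sc
  have "(-1) ^ n * (c * V (x + real n / real n)) + c * V x = c * ((-1) ^ n * V (x + real n / real n) + V x)"
    for x by (simp add: algebra_simps)
  then show ?thesis using Sc assms by (auto simp: ker_cond_def opT_funpow elim!: eventually_mono)
qed

text \<open>\<open>- lam * centered (d2f_prod f u v w)\<close> is the mean-free representative of \<open>\<Delta>\<^sup>-\<^sup>1 D\<^sub>u\<^sub>uF(lam,u)[v,w]\<close>.\<close>

lemma DuuF_potential:
  fixes f u v w :: "real \<Rightarrow> real" and lam :: real
  defines "h \<equiv> \<lambda>x. - lam * centered (d2f_prod f u v w) x"
  assumes g: "ess_bounded (ext (d2f_prod f u v w))"
  shows "ext h = (\<lambda>x. - lam * ext (centered (d2f_prod f u v w)) x)"
    and "ess_bounded (ext h)"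
    and "integral {0..1} h = 0"
    and "\<And>\<phi>. neumann_test \<phi> \<Longrightarrow> DuuF f lam u v w \<phi> = lapD h \<phi>"
proof -
  let ?g = "d2f_prod f u v w"
  show e: "ext h = (\<lambda>x. - lam * ext (centered ?g) x)"
    by (simp add: h_def fun_eq_iff ext_eq_fold_unit)
  show "ess_bounded (ext h)"
    unfolding e ext_centered by (intro ess_bounded_cmult ess_bounded_diff g ess_bounded_const)
  have int: "integrable (lebesgue_on {0..1}) ?g" by (rule ess_bounded_integrable_ext[OF g])
  then show "integral {0..1} h = 0"
    using integral_centered[OF integrable_on_lebesgue_on] by (simp add: h_def)
  show "DuuF f lam u v w \<phi> = lapD h \<phi>" if "neumann_test \<phi>" for \<phi>
  proof -
    have "h = (\<lambda>x. - lam * ?g x + lam * integral {0..1} ?g)"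
      by (simp add: h_def centered_def fun_eq_iff algebra_simps)
    then have "lapD h \<phi> = - lam * lapD ?g \<phi>"
      using lapD_cmult_add_const[OF that int, of "- lam" "lam * integral {0..1} ?g"] by (simp only:)
    moreover have "DuuF f lam u v w \<phi> = - (lam * lapD ?g \<phi>)"
      using lapD_cmult_add_const[OF that int, of lam 0] by (simp add: DuuF_def d2f_prod_def[abs_def] mult.assoc)
    ultimately show ?thesis by simp
  qed
qed

lemma Ysub_DuuF:
  assumes g: "ess_bounded (ext (d2f_prod f u v w))" and ker: "ker_cond n \<tau> (ext (centered (d2f_prod f u v w)))"
  shows "Ysub n \<tau> (DuuF f lam u v w)"
  by (rule Ysub_intro[OF DuuF_potential(2,3)[OF g] _ DuuF_potential(4)[OF g]])
    (unfold DuuF_potential(1)[OF g], rule ker_cond_cmult[OF ker])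

lemma dsumY_DuuF:
  assumes "n \<ge> 1" and g: "ess_bounded (ext (d2f_prod f u v w))"
    and eigen: "shift_eigen 1 ((-1) ^ n) (ext (centered (d2f_prod f u v w)))"
  shows "dsumY (Ysub n Sa) (Ysub n Sb) (DuuF f lam u v w)"
  by (rule dsumY_intro[OF \<open>n \<ge> 1\<close> DuuF_potential(2,3)[OF g] _ DuuF_potential(4)[OF g]])
    (unfold DuuF_potential(1)[OF g], rule shift_eigen_cmult[OF eigen])

lemma shift_eigen_centered:
  assumes g: "ess_bounded (ext g)" and eigen: "shift_eigen s c (ext g)"
    and "0 \<le> s" "s \<le> 2" and c: "c = 1 \<or> c = -1"
  shows "shift_eigen s c (ext (centered g))"
proof -
  have "c = 1 \<or> - integral {0..1} g = 0"
    using c shift_eigen_integral_eq_0[OF ess_bounded_integrable_on[OF g] ext_add_2 \<open>0 \<le> s\<close> \<open>s \<le> 2\<close>]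
      eigen integral_ext(2)[OF ess_bounded_integrable_on[OF g]] by auto
  from shift_eigen_affine[OF eigen this, of 1] show ?thesis
    by (simp add: ext_centered)
qed

lemma ker_cond_Sb_centered:
  assumes n: "n \<ge> 1" and g: "ess_bounded (ext g)" and ker: "ker_cond n Sb (ext g)"
  shows "ker_cond n Sb (ext (centered g))"
proof -
  have "(\<Sum>k<n. (-1::real) ^ k) = (if even n then 0 else 1)" by (induction n) auto
  moreover have "integral {0..1} g = 0" if "odd n"
  proof -
    have "shift_eigen 1 (-1) (ext g)" using ker_cond_Sb_imp_shift_eigen[OF n ker] that by simp
    from shift_eigen_integral_eq_0[OF ess_bounded_integrable_on[OF g] ext_add_2 _ _ this] show ?thesis
      using integral_ext(2)[OF ess_bounded_integrable_on[OF g]] by simp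
  qed
  ultimately have "(\<Sum>k<n. (-1::real) ^ k) * integral {0..1} g = 0" by simp
  with ker show ?thesis
    by (simp add: ker_cond_Sb_iff ext_centered right_diff_distrib sum_subtractf sum_distrib_right)
qed

lemma ker_cond_Sb_mult_periodic:
  assumes B: "shift_eigen (1 / real n) 1 B" and W: "ker_cond n Sb W"
  shows "ker_cond n Sb (\<lambda>x. B x * W x)"
proof -
  have "\<forall>k\<in>{..<n}. AE x in lebesgue. B (x + real k / real n) = B x"
    using shift_eigen_iterate[OF B] by (simp add: shift_eigen_def)
  then have "AE x in lebesgue. \<forall>k\<in>{..<n}. B (x + real k / real n) = B x"
    by (subst AE_finite_all) auto
  with W show ?thesis unfolding ker_cond_Sb_iff
  proof eventually_elim
    case (elim x)
    have "(\<Sum>k<n. (-1) ^ k * (B (x + real k / real n) * W (x + real k / real n))) =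
        (\<Sum>k<n. B x * ((-1) ^ k * W (x + real k / real n)))"
      using elim(2) by (intro sum.cong refl) (simp add: mult_ac)
    also have "\<dots> = B x * (\<Sum>k<n. (-1) ^ k * W (x + real k / real n))"
      by (simp add: sum_distrib_left)
    finally show ?case using elim(1) by simp
  qed
qed

section \<open>The five inclusions\<close>

lemma shift_eigen_ext_d2f_prod:
  assumes "shift_eigen s a (\<lambda>x. deriv (deriv f) (ext u x))" "shift_eigen s b (ext v)" "shift_eigen s c (ext w)"
  shows "shift_eigen s (a * b * c) (ext (d2f_prod f u v w))"
  unfolding ext_d2f_prod by (intro shift_eigen_mult assms)

lemma Xsub_ess_bounded: "Xsub n \<tau> v \<Longrightarrow> ess_bounded (ext v)"
  unfolding Xsub_def by (blast intro: ess_bounded_ext)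

lemma Xsub_Sa_shift_eigen: "Xsub n Sa v \<Longrightarrow> shift_eigen (1 / real n) (-1) (ext v)"
  by (simp add: Xsub_def ker_cond_Sa_iff)

lemma shift_eigen_1_if_antiperiodic:
  assumes "n \<ge> 1" and "shift_eigen (1 / real n) (-1) V"
  shows "shift_eigen 1 ((-1) ^ n) V"
  using shift_eigen_iterate[OF assms(2), of n] assms(1) by simp

lemma Xsub_Sb_shift_eigen: "n \<ge> 1 \<Longrightarrow> Xsub n Sb v \<Longrightarrow> shift_eigen 1 ((-1) ^ n) (ext v)"
  by (simp add: Xsub_def ker_cond_Sb_imp_shift_eigen)

lemma Xsub_Sc_shift_eigen: "n \<ge> 1 \<Longrightarrow> Xsub n Sc v \<Longrightarrow> shift_eigen 1 (- ((-1) ^ n)) (ext v)"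
  by (simp add: Xsub_def ker_cond_Sc_iff)

lemma dsumX_Sa_Sb:
  assumes n: "n \<ge> 1" and "dsumX (Xsub n Sa) (Xsub n Sb) v"
  shows "ess_bounded (ext v)" and "shift_eigen 1 ((-1) ^ n) (ext v)"
proof -
  obtain va vb where a: "Xsub n Sa va" and b: "Xsub n Sb vb"
    and ae: "AE t in lebesgue_on {0..1}. v t = va t + vb t"
    using assms(2) unfolding dsumX_def by blast
  have eq: "AE x in lebesgue. ext v x = ext va x + ext vb x"
    unfolding ext_eq_fold_unit by (rule AE_fold_unit[OF ae])
  show "ess_bounded (ext v)"
    by (rule ess_bounded_AE_cong[OF ess_bounded_add[OF Xsub_ess_bounded[OF a] Xsub_ess_bounded[OF b]] eq])
  show "shift_eigen 1 ((-1) ^ n) (ext v)"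
    using shift_eigen_add[OF shift_eigen_1_if_antiperiodic[OF n Xsub_Sa_shift_eigen[OF a]] Xsub_Sb_shift_eigen[OF n b]]
    by (rule shift_eigen_AE_cong[OF _ eq])
qed

lemma neg_one_power_cases: "(-1) ^ n = (1 :: real) \<or> (-1) ^ n = (-1 :: real)"
  by (simp add: minus_one_power_iff)

context
  fixes n :: nat and f u :: "real \<Rightarrow> real"
  assumes n: "n \<ge> 1" and f: "smooth_fun f" and odd: "\<forall>x. f (- x) = - f x" and u: "Xsub n Sa u"
begin

lemma ess_bounded_ext_d2f_prod:
  assumes "ess_bounded (ext v)" "ess_bounded (ext w)"
  shows "ess_bounded (ext (d2f_prod f u v w))"
  unfolding ext_d2f_prod
  by (intro ess_bounded_mult assms ess_bounded_compose[OF _ Xsub_ess_bounded[OF u]]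
      smooth_fun_continuous_on smooth_fun_deriv f)

lemma shift_eigen_d2f_ext:
  "shift_eigen (1 / real n) (-1) (\<lambda>x. deriv (deriv f) (ext u x))"
  by (rule shift_eigen_compose_odd[OF Xsub_Sa_shift_eigen[OF u]]) (rule deriv2_odd[OF f odd])

lemma shift_eigen_1_d2f_ext: "shift_eigen 1 ((-1) ^ n) (\<lambda>x. deriv (deriv f) (ext u x))"
  by (rule shift_eigen_1_if_antiperiodic[OF n shift_eigen_d2f_ext])

lemma DuuF_Xa_Xa:
  assumes v: "Xsub n Sa v" and w: "Xsub n Sa w"
  shows "Ysub n Sa (DuuF f lam u v w)"
proof (rule Ysub_DuuF)
  show g: "ess_bounded (ext (d2f_prod f u v w))"
    by (intro ess_bounded_ext_d2f_prod Xsub_ess_bounded[OF v] Xsub_ess_bounded[OF w])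
  have "shift_eigen (1 / real n) (-1 * -1 * -1) (ext (d2f_prod f u v w))"
    by (intro shift_eigen_ext_d2f_prod shift_eigen_d2f_ext Xsub_Sa_shift_eigen v w)
  then show "ker_cond n Sa (ext (centered (d2f_prod f u v w)))"
    unfolding ker_cond_Sa_iff using n by (intro shift_eigen_centered[OF g]) (auto simp: divide_le_eq)
qed

lemma DuuF_Xab_Xab:
  assumes v: "dsumX (Xsub n Sa) (Xsub n Sb) v" and w: "dsumX (Xsub n Sa) (Xsub n Sb) w"
  shows "dsumY (Ysub n Sa) (Ysub n Sb) (DuuF f lam u v w)"
proof (rule dsumY_DuuF[OF n])
  show g: "ess_bounded (ext (d2f_prod f u v w))"
    by (intro ess_bounded_ext_d2f_prod dsumX_Sa_Sb(1)[OF n v] dsumX_Sa_Sb(1)[OF n w])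
  have "shift_eigen 1 ((-1) ^ n * (-1) ^ n * (-1) ^ n) (ext (d2f_prod f u v w))"
    by (intro shift_eigen_ext_d2f_prod shift_eigen_1_d2f_ext dsumX_Sa_Sb(2)[OF n v] dsumX_Sa_Sb(2)[OF n w])
  then show "shift_eigen 1 ((-1) ^ n) (ext (centered (d2f_prod f u v w)))"
    by (intro shift_eigen_centered[OF g]) (use neg_one_power_cases[of n] in auto)
qed

lemma DuuF_Xa_Xb:
  assumes v: "Xsub n Sa v" and w: "Xsub n Sb w"
  shows "Ysub n Sb (DuuF f lam u v w)"
proof (rule Ysub_DuuF)
  show g: "ess_bounded (ext (d2f_prod f u v w))"
    by (intro ess_bounded_ext_d2f_prod Xsub_ess_bounded[OF v] Xsub_ess_bounded[OF w])
  have "shift_eigen (1 / real n) (-1 * -1) (\<lambda>x. deriv (deriv f) (ext u x) * ext v x)"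
    by (intro shift_eigen_mult shift_eigen_d2f_ext Xsub_Sa_shift_eigen v)
  then have "ker_cond n Sb (\<lambda>x. deriv (deriv f) (ext u x) * ext v x * ext w x)"
    using w unfolding Xsub_def by (intro ker_cond_Sb_mult_periodic) auto
  then show "ker_cond n Sb (ext (centered (d2f_prod f u v w)))"
    by (intro ker_cond_Sb_centered[OF n g]) (simp add: ext_d2f_prod)
qed

lemma DuuF_Xc_Xc:
  assumes v: "Xsub n Sc v" and w: "Xsub n Sc w"
  shows "dsumY (Ysub n Sa) (Ysub n Sb) (DuuF f lam u v w)"
proof (rule dsumY_DuuF[OF n])
  show g: "ess_bounded (ext (d2f_prod f u v w))"
    by (intro ess_bounded_ext_d2f_prod Xsub_ess_bounded[OF v] Xsub_ess_bounded[OF w])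
  have "shift_eigen 1 ((-1) ^ n * - ((-1) ^ n) * - ((-1) ^ n)) (ext (d2f_prod f u v w))"
    by (intro shift_eigen_ext_d2f_prod shift_eigen_1_d2f_ext Xsub_Sc_shift_eigen[OF n] v w)
  then show "shift_eigen 1 ((-1) ^ n) (ext (centered (d2f_prod f u v w)))"
    by (intro shift_eigen_centered[OF g]) (use neg_one_power_cases[of n] in auto)
qed

lemma DuuF_Xab_Xc:
  assumes v: "dsumX (Xsub n Sa) (Xsub n Sb) v" and w: "Xsub n Sc w"
  shows "Ysub n Sc (DuuF f lam u v w)"
proof (rule Ysub_DuuF)
  show g: "ess_bounded (ext (d2f_prod f u v w))"
    by (intro ess_bounded_ext_d2f_prod dsumX_Sa_Sb(1)[OF n v] Xsub_ess_bounded[OF w])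
  have "shift_eigen 1 ((-1) ^ n * (-1) ^ n * - ((-1) ^ n)) (ext (d2f_prod f u v w))"
    by (intro shift_eigen_ext_d2f_prod shift_eigen_1_d2f_ext dsumX_Sa_Sb(2)[OF n v] Xsub_Sc_shift_eigen[OF n w])
  then show "ker_cond n Sc (ext (centered (d2f_prod f u v w)))"
    unfolding ker_cond_Sc_iff[OF n]
    by (intro shift_eigen_centered[OF g]) (use neg_one_power_cases[of n] in auto)
qed

end

theorem lemma2p14:
  fixes n :: nat and \<sigma> :: real and f :: "real \<Rightarrow> real"
  assumes "n \<ge> 1" and "\<sigma> > 0"
    and "smooth_fun f" and "\<forall>x. f (- x) = - f x"
  shows "\<forall>lam u. Xsub n Sa u \<longrightarrow>
     (\<forall>v w. Xsub n Sa v \<longrightarrow> Xsub n Sa w \<longrightarrow> Ysub n Sa (DuuF f lam u v w)) \<and>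
     (\<forall>v w. dsumX (Xsub n Sa) (Xsub n Sb) v \<longrightarrow> dsumX (Xsub n Sa) (Xsub n Sb) w \<longrightarrow>
        dsumY (Ysub n Sa) (Ysub n Sb) (DuuF f lam u v w)) \<and>
     (\<forall>v w. Xsub n Sa v \<longrightarrow> Xsub n Sb w \<longrightarrow> Ysub n Sb (DuuF f lam u v w)) \<and>
     (\<forall>v w. Xsub n Sc v \<longrightarrow> Xsub n Sc w \<longrightarrow> dsumY (Ysub n Sa) (Ysub n Sb) (DuuF f lam u v w)) \<and>
     (\<forall>v w. dsumX (Xsub n Sa) (Xsub n Sb) v \<longrightarrow> Xsub n Sc w \<longrightarrow> Ysub n Sc (DuuF f lam u v w))"
  using DuuF_Xa_Xa[OF assms(1,3,4)] DuuF_Xab_Xab[OF assms(1,3,4)] DuuF_Xa_Xb[OF assms(1,3,4)]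
    DuuF_Xc_Xc[OF assms(1,3,4)] DuuF_Xab_Xc[OF assms(1,3,4)]
  by blast

end
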